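(* Let $\mathcal{L}_{9}\subset\mathbb{P}^2_{\mathbb{C}}$ be the line arrangement defined by $$y(y-z)(y+z)(y-x)(y+x)(y-x-2z)(y-x+2z)(y+x-2z)(y+x+2z)=0,$$ and let $\mathcal{L}_{9}'\subset\mathbb{P}^2_{\mathbb{C}}$ be the line arrangement defined by $$xyz(x+y)(x+z)(y-z)(x+y+ez)(x-ey+z)(x-ey+ez)=0,$$ where $e\in\mathbb{C}$ satisfies $e^{2}+1=0$. Then $\mathcal{L}_{9}$ and $\mathcal{L}_{9}'$ form a weak Ziegler pair.
   Context: For a reduced curve $C: f=0$ in $\mathbb{P}^2_{\mathbb{C}}$, ${\rm mdr}(f)$ is the minimal degree $r$ of a nonzero triple $(a,b,c)$ of homogeneous polynomials of degree $r$ in $\mathbb{C}[x,y,z]$ with $a\,\partial_x f+b\,\partial_y f+c\,\partial_z f=0$. For a line arrangement, $n_i$ is the number of points where exactly $i$ lines meet, and the weak-combinatorics is $(d;n_2,\dots,n_m)$ with $d$ the number of lines and $m$ the maximal multiplicity. Two reduced plane curves $C_1,C_2$ with all irreducible components smooth form a weak Ziegler pair if they have the same weak-combinatorics but ${\rm mdr}(C_1)\neq{\rm mdr}(C_2)$. *)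

theory Defs
  imports "HOL-Analysis.Analysis"
begin

type_synonym pt = "complex \<times> complex \<times> complex"

(* A homogeneous polynomial of degree r in C[x,y,z], given by its coefficient
   function on exponent triples (i,j,k); all monomials have i+j+k = r. *)
definition hpoly :: "nat \<Rightarrow> (nat \<times> nat \<times> nat \<Rightarrow> complex) \<Rightarrow> bool" where
  "hpoly r a \<longleftrightarrow> (\<forall>i j k. a (i, j, k) \<noteq> 0 \<longrightarrow> i + j + k = r)"

definition peval :: "nat \<Rightarrow> (nat \<times> nat \<times> nat \<Rightarrow> complex) \<Rightarrow> pt \<Rightarrow> complex" where
  "peval r a p = (case p of (x, y, z) \<Rightarrow>
      (\<Sum>i\<le>r. \<Sum>j\<le>r. \<Sum>k\<le>r. a (i, j, k) * x ^ i * y ^ j * z ^ k))"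

definition pdx :: "(pt \<Rightarrow> complex) \<Rightarrow> pt \<Rightarrow> complex" where
  "pdx f p = (case p of (x, y, z) \<Rightarrow> deriv (\<lambda>t. f (t, y, z)) x)"
definition pdy :: "(pt \<Rightarrow> complex) \<Rightarrow> pt \<Rightarrow> complex" where
  "pdy f p = (case p of (x, y, z) \<Rightarrow> deriv (\<lambda>t. f (x, t, z)) y)"
definition pdz :: "(pt \<Rightarrow> complex) \<Rightarrow> pt \<Rightarrow> complex" where
  "pdz f p = (case p of (x, y, z) \<Rightarrow> deriv (\<lambda>t. f (x, y, t)) z)"

(* (a,b,c) is a nonzero syzygy of degree r of the Jacobian of f.
   Polynomial identity over C is equivalent to identity of polynomial functions. *)
definition syzygy :: "(pt \<Rightarrow> complex) \<Rightarrow> nat \<Rightarrow> (nat \<times> nat \<times> nat \<Rightarrow> complex) \<Rightarrow>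
    (nat \<times> nat \<times> nat \<Rightarrow> complex) \<Rightarrow> (nat \<times> nat \<times> nat \<Rightarrow> complex) \<Rightarrow> bool" where
  "syzygy f r a b c \<longleftrightarrow> hpoly r a \<and> hpoly r b \<and> hpoly r c \<and>
     (a \<noteq> (\<lambda>_. 0) \<or> b \<noteq> (\<lambda>_. 0) \<or> c \<noteq> (\<lambda>_. 0)) \<and>
     (\<forall>p. peval r a p * pdx f p + peval r b p * pdy f p + peval r c p * pdz f p = 0)"

definition mdr :: "(pt \<Rightarrow> complex) \<Rightarrow> nat" where
  "mdr f = (LEAST r. \<exists>a b c. syzygy f r a b c)"

definition lin :: "pt \<Rightarrow> pt \<Rightarrow> complex" where
  "lin l p = (case l of (a, b, c) \<Rightarrow> case p of (x, y, z) \<Rightarrow> a * x + b * y + c * z)"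

definition arr_poly :: "pt list \<Rightarrow> pt \<Rightarrow> complex" where
  "arr_poly L p = (\<Prod>l\<leftarrow>L. lin l p)"

definition proportional :: "pt \<Rightarrow> pt \<Rightarrow> bool" where
  "proportional l m \<longleftrightarrow> (\<exists>c::complex. c \<noteq> 0 \<and>
     (case l of (a, b, d) \<Rightarrow> m = (c * a, c * b, c * d)))"

definition line_arrangement :: "pt list \<Rightarrow> bool" where
  "line_arrangement L \<longleftrightarrow> (\<forall>l\<in>set L. l \<noteq> (0, 0, 0)) \<and>
     (\<forall>i<length L. \<forall>j<length L. i \<noteq> j \<longrightarrow> \<not> proportional (L ! i) (L ! j))"

(* the point of P^2 represented by a nonzero p, as the line C p in C^3 *)
definition proj_pt :: "pt \<Rightarrow> pt set" where
  "proj_pt p = (case p of (x, y, z) \<Rightarrow> {(c * x, c * y, c * z) | c. True})"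

definition mult_at :: "pt list \<Rightarrow> pt \<Rightarrow> nat" where
  "mult_at L p = length (filter (\<lambda>l. lin l p = 0) L)"

definition n_pts :: "pt list \<Rightarrow> nat \<Rightarrow> nat" where
  "n_pts L i = card {proj_pt p | p. p \<noteq> (0, 0, 0) \<and> mult_at L p = i}"

definition same_weak_comb :: "pt list \<Rightarrow> pt list \<Rightarrow> bool" where
  "same_weak_comb L M \<longleftrightarrow> length L = length M \<and> (\<forall>i\<ge>2. n_pts L i = n_pts M i)"

definition weak_ziegler_pair :: "pt list \<Rightarrow> pt list \<Rightarrow> bool" where
  "weak_ziegler_pair L M \<longleftrightarrow> line_arrangement L \<and> line_arrangement M \<and>
     same_weak_comb L M \<and> mdr (arr_poly L) \<noteq> mdr (arr_poly M)"

end

theory Submission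
  imports Defs
begin

(* A syzygy (a, b, c) of f = l_1 \<cdots> l_d is a vector field \<theta> with \<theta> f = 0. At a point p lying on
   exactly one line l of the arrangement this forces l(\<theta>(p)) = 0, and the Euler field E satisfies
   l(E(p)) = l(p) = 0 there as well. For L9' we subtract from a quartic syzygy \<theta> the multiple h E,
   h = a / x, that removes every monomial divisible by x from its first component; the finitely many
   linear conditions l(\<theta> - h E)(p) = 0 at chosen simple points then force \<theta> = h E, and
   \<theta> f = 9 h f forces h = 0. So mdr of L9' exceeds 4 (the Koszul syzygy shows that it exists),
   whereas L9 has an explicit quartic syzygy, checked through the logarithmic derivative
   \<theta> l_i = k_i l_i with \<Sum> k_i = 0. Both arrangements have 6 double and 10 triple points. *)

section \<open>Homogeneous polynomials\<close>

type_synonym coeffs = "nat \<times> nat \<times> nat \<Rightarrow> complex"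

fun mon :: "nat \<times> nat \<times> nat \<Rightarrow> pt \<Rightarrow> complex" where
  "mon (i, j, k) (x, y, z) = x ^ i * y ^ j * z ^ k"

definition monomials :: "nat \<Rightarrow> (nat \<times> nat \<times> nat) set" where
  "monomials r = {(i, j, k). i + j + k = r}"

definition monomial_list :: "nat \<Rightarrow> (nat \<times> nat \<times> nat) list" where
  "monomial_list r = filter (\<lambda>(i, j, k). i + j + k = r)
     (List.product [0..<Suc r] (List.product [0..<Suc r] [0..<Suc r]))"

lemma set_monomial_list: "set (monomial_list r) = monomials r"
  unfolding monomial_list_def monomials_def by auto

lemma distinct_monomial_list: "distinct (monomial_list r)"
  unfolding monomial_list_def by (simp add: distinct_product)

lemma finite_monomials [simp]: "finite (monomials r)"
  by (simp flip: set_monomial_list)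

lemma monomials_0 [simp]: "monomials 0 = {(0, 0, 0)}"
  by (auto simp: monomials_def)

lemma hpoly_iff_monomials: "hpoly r a \<longleftrightarrow> (\<forall>t. a t \<noteq> 0 \<longrightarrow> t \<in> monomials r)"
  by (auto simp: hpoly_def monomials_def)

lemma hpoly_add: "hpoly r f \<Longrightarrow> hpoly r g \<Longrightarrow> hpoly r (\<lambda>t. f t + g t)"
  unfolding hpoly_def by (metis add.right_neutral add_0)

lemma hpoly_diff: "hpoly r f \<Longrightarrow> hpoly r g \<Longrightarrow> hpoly r (\<lambda>t. f t - g t)"
  unfolding hpoly_def by (metis diff_zero diff_self)

lemma hpoly_cmult: "hpoly r f \<Longrightarrow> hpoly r (\<lambda>t. c * f t)"
  by (auto simp: hpoly_def)

lemma peval_box: "peval r a p = (\<Sum>t\<in>{..r} \<times> {..r} \<times> {..r}. a t * mon t p)"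
  by (cases p) (auto simp: peval_def sum.cartesian_product mult.assoc intro!: sum.cong)

lemma peval_monomials:
  assumes "hpoly r a"
  shows "peval r a p = (\<Sum>t\<in>monomials r. a t * mon t p)"
  unfolding peval_box
  by (rule sum.mono_neutral_right) (use assms in \<open>auto simp: hpoly_iff_monomials monomials_def\<close>)

lemma peval_add: "peval r (\<lambda>t. f t + g t) p = peval r f p + peval r g p"
  by (simp add: peval_box distrib_right sum.distrib)

lemma peval_diff: "peval r (\<lambda>t. f t - g t) p = peval r f p - peval r g p"
  by (simp add: peval_box left_diff_distrib sum_subtractf)

lemma peval_cmult: "peval r (\<lambda>t. c * f t) p = c * peval r f p"
  by (simp add: peval_box sum_distrib_left mult.assoc)

fun shift :: "nat \<times> nat \<times> nat \<Rightarrow> coeffs \<Rightarrow> coeffs" where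
  "shift (m1, m2, m3) g (i, j, k) =
     (if m1 \<le> i \<and> m2 \<le> j \<and> m3 \<le> k then g (i - m1, j - m2, k - m3) else 0)"

lemma shift_zero [simp]: "shift m (\<lambda>_. 0) t = 0"
  by (cases m; cases t) simp

lemma hpoly_shift: "hpoly r g \<Longrightarrow> hpoly (m1 + m2 + m3 + r) (shift (m1, m2, m3) g)"
  by (fastforce simp: hpoly_def split: if_splits)

lemma peval_shift:
  assumes "hpoly r g"
  shows "peval (m1 + m2 + m3 + r) (shift (m1, m2, m3) g) p = mon (m1, m2, m3) p * peval r g p"
proof -
  obtain x y z where p: "p = (x, y, z)"
    by (cases p)
  define add where "add = (\<lambda>(i, j, k). (m1 + i, m2 + j, m3 + k))"
  have "peval (m1 + m2 + m3 + r) (shift (m1, m2, m3) g) p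
      = (\<Sum>t\<in>monomials (m1 + m2 + m3 + r). shift (m1, m2, m3) g t * mon t p)"
    by (rule peval_monomials[OF hpoly_shift[OF assms]])
  also have "\<dots> = (\<Sum>t\<in>add ` monomials r. shift (m1, m2, m3) g t * mon t p)"
  proof (rule sum.mono_neutral_right[OF finite_monomials])
    show "add ` monomials r \<subseteq> monomials (m1 + m2 + m3 + r)"
      by (auto simp: add_def monomials_def)
    have "shift (m1, m2, m3) g (i, j, k) = 0"
      if "(i, j, k) \<in> monomials (m1 + m2 + m3 + r) - add ` monomials r" for i j k
    proof (rule ccontr)
      assume "shift (m1, m2, m3) g (i, j, k) \<noteq> 0"
      then have "m1 \<le> i \<and> m2 \<le> j \<and> m3 \<le> k"
        by (auto split: if_splits)
      then have "(i, j, k) = add (i - m1, j - m2, k - m3)" and "(i - m1, j - m2, k - m3) \<in> monomials r"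
        using that by (auto simp: add_def monomials_def)
      then show False
        using that by blast
    qed
    then show "\<forall>t\<in>monomials (m1 + m2 + m3 + r) - add ` monomials r. shift (m1, m2, m3) g t * mon t p = 0"
      by auto
  qed
  also have "\<dots> = (\<Sum>s\<in>monomials r. g s * mon (add s) p)"
    by (subst sum.reindex) (auto simp: inj_on_def add_def intro!: sum.cong split: prod.split)
  also have "\<dots> = mon (m1, m2, m3) p * (\<Sum>s\<in>monomials r. g s * mon s p)"
    by (auto simp: sum_distrib_left add_def p power_add intro!: sum.cong)
  finally show ?thesis
    by (simp add: peval_monomials[OF assms])
qed

definition mul_lin :: "pt \<Rightarrow> coeffs \<Rightarrow> coeffs" where
  "mul_lin l g = (\<lambda>t. fst l * shift (1, 0, 0) g t + fst (snd l) * shift (0, 1, 0) g t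
     + snd (snd l) * shift (0, 0, 1) g t)"

lemma mul_lin_zero [simp]: "mul_lin l (\<lambda>_. 0) = (\<lambda>_. 0)"
  by (simp add: mul_lin_def)

lemma hpoly_mul_lin:
  assumes "hpoly r g"
  shows "hpoly (Suc r) (mul_lin l g)"
  using hpoly_shift[OF assms, of 1 0 0] hpoly_shift[OF assms, of 0 1 0] hpoly_shift[OF assms, of 0 0 1]
  unfolding mul_lin_def by (intro hpoly_add hpoly_cmult) simp_all

lemma peval_mul_lin:
  assumes "hpoly r g"
  shows "peval (Suc r) (mul_lin l g) p = lin l p * peval r g p"
  using peval_shift[OF assms, of 1 0 0 p] peval_shift[OF assms, of 0 1 0 p] peval_shift[OF assms, of 0 0 1 p]
  by (cases l; cases p) (simp add: mul_lin_def peval_add peval_cmult lin_def algebra_simps)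

definition poly_of :: "((nat \<times> nat \<times> nat) \<times> int) list \<Rightarrow> coeffs" where
  "poly_of cs t = of_int (case map_of cs t of Some v \<Rightarrow> v | None \<Rightarrow> 0)"

lemma poly_of_nonzero:
  assumes "map_of cs t = Some v" "v \<noteq> 0"
  shows "poly_of cs \<noteq> (\<lambda>_. 0)"
proof
  assume "poly_of cs = (\<lambda>_. 0)"
  then have "poly_of cs t = 0"
    by simp
  with assms show False
    by (simp add: poly_of_def)
qed

lemma hpoly_poly_of: "\<forall>(t, _)\<in>set cs. t \<in> monomials r \<Longrightarrow> hpoly r (poly_of cs)"
  by (auto simp: hpoly_iff_monomials poly_of_def split: option.splits dest: map_of_SomeD)

section \<open>Gaussian integers\<close>

(* (a, b) stands for a + b e with e\<^sup>2 = -1, so a single computation covers both e = \<i> and e = -\<i>. *)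
type_synonym gauss = "int \<times> int"

type_synonym gpt = "gauss \<times> gauss \<times> gauss"

definition of_gauss :: "complex \<Rightarrow> gauss \<Rightarrow> complex" where
  "of_gauss e g = of_int (fst g) + of_int (snd g) * e"

definition of_gpt :: "complex \<Rightarrow> gpt \<Rightarrow> pt" where
  "of_gpt e v = (of_gauss e (fst v), of_gauss e (fst (snd v)), of_gauss e (snd (snd v)))"

definition gadd :: "gauss \<Rightarrow> gauss \<Rightarrow> gauss" where
  "gadd g h = (fst g + fst h, snd g + snd h)"

definition gsub :: "gauss \<Rightarrow> gauss \<Rightarrow> gauss" where
  "gsub g h = (fst g - fst h, snd g - snd h)"

definition gmul :: "gauss \<Rightarrow> gauss \<Rightarrow> gauss" where
  "gmul g h = (fst g * fst h - snd g * snd h, fst g * snd h + snd g * fst h)"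

fun gpow :: "gauss \<Rightarrow> nat \<Rightarrow> gauss" where
  "gpow g 0 = (1, 0)"
| "gpow g (Suc n) = gmul g (gpow g n)"

definition glin :: "gpt \<Rightarrow> gpt \<Rightarrow> gauss" where
  "glin l p = gadd (gadd (gmul (fst l) (fst p)) (gmul (fst (snd l)) (fst (snd p))))
     (gmul (snd (snd l)) (snd (snd p)))"

definition gmon :: "nat \<times> nat \<times> nat \<Rightarrow> gpt \<Rightarrow> gauss" where
  "gmon t p = gmul (gmul (gpow (fst p) (fst t)) (gpow (fst (snd p)) (fst (snd t))))
     (gpow (snd (snd p)) (snd (snd t)))"

definition gmult :: "gpt list \<Rightarrow> gpt \<Rightarrow> nat" where
  "gmult L p = length (filter (\<lambda>l. glin l p = (0, 0)) L)"

lemma of_gauss_real [simp]: "of_gauss e (a, 0) = of_int a"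
  by (simp add: of_gauss_def)

lemma of_gauss_gadd: "of_gauss e (gadd g h) = of_gauss e g + of_gauss e h"
  by (simp add: of_gauss_def gadd_def algebra_simps)

lemma of_gauss_gsub: "of_gauss e (gsub g h) = of_gauss e g - of_gauss e h"
  by (simp add: of_gauss_def gsub_def algebra_simps)

context
  fixes e :: complex
  assumes e: "e\<^sup>2 = -1"
begin

lemma of_gauss_gmul: "of_gauss e (gmul g h) = of_gauss e g * of_gauss e h"
proof -
  have "of_gauss e g * of_gauss e h = of_int (fst g * fst h) + of_int (snd g * snd h) * e\<^sup>2
      + of_int (fst g * snd h + snd g * fst h) * e"
    by (simp add: of_gauss_def algebra_simps power2_eq_square)
  then show ?thesis
    by (simp add: e of_gauss_def gmul_def)
qed

lemma of_gauss_eq_0_iff: "of_gauss e g = 0 \<longleftrightarrow> g = (0, 0)"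
proof
  assume "of_gauss e g = 0"
  moreover have "of_gauss e g * (of_int (fst g) - of_int (snd g) * e)
      = of_int (fst g ^ 2) - of_int (snd g ^ 2) * e\<^sup>2"
    by (simp add: of_gauss_def algebra_simps power2_eq_square)
  ultimately have "of_int (fst g ^ 2 + snd g ^ 2) = (0::complex)"
    using e by simp
  then have "fst g ^ 2 + snd g ^ 2 = 0"
    by (simp only: of_int_eq_0_iff)
  then show "g = (0, 0)"
    by (simp add: prod_eq_iff)
qed (simp add: of_gauss_def)

lemma lin_of_gpt: "lin (of_gpt e l) (of_gpt e p) = of_gauss e (glin l p)"
  by (simp add: lin_def of_gpt_def glin_def of_gauss_gadd of_gauss_gmul split: prod.splits)

lemma mon_of_gpt: "mon t (of_gpt e p) = of_gauss e (gmon t p)"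
proof -
  have "of_gauss e (gpow g n) = of_gauss e g ^ n" for g n
    by (induction n) (simp_all add: of_gauss_gmul)
  then show ?thesis
    by (cases t) (simp add: of_gpt_def gmon_def of_gauss_gmul)
qed

lemma mult_at_of_gpt: "mult_at (map (of_gpt e) L) (of_gpt e p) = gmult L p"
  by (simp add: mult_at_def gmult_def filter_map comp_def lin_of_gpt of_gauss_eq_0_iff)

end

section \<open>Derivatives of a product of linear forms\<close>

lemma arr_poly_Nil [simp]: "arr_poly [] p = 1"
  by (simp add: arr_poly_def)

lemma arr_poly_Cons [simp]: "arr_poly (l # L) p = lin l p * arr_poly L p"
  by (simp add: arr_poly_def)

lemma arr_poly_nonzero: "mult_at L p = 0 \<Longrightarrow> arr_poly L p \<noteq> 0"
  by (auto simp: mult_at_def arr_poly_def prod_list_zero_iff filter_empty_conv)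

lemma arr_poly_remove1_nonzero:
  assumes "l \<in> set L" "lin l p = 0" "mult_at L p = 1"
  shows "arr_poly (remove1 l L) p \<noteq> 0"
proof -
  have "filter (\<lambda>m. lin m p = 0) (remove1 l L) = remove1 l (filter (\<lambda>m. lin m p = 0) L)"
    by (rule filter_remove1)
  then have "mult_at (remove1 l L) p = 0"
    using assms by (simp add: mult_at_def length_remove1)
  then show ?thesis
    by (rule arr_poly_nonzero)
qed

fun arr_deriv :: "pt list \<Rightarrow> pt \<Rightarrow> pt \<Rightarrow> complex" where
  "arr_deriv [] p v = 0"
| "arr_deriv (l # L) p v = lin l v * arr_poly L p + lin l p * arr_deriv L p v"

lemma arr_poly_has_derivative:
  "((\<lambda>s. arr_poly L (x + s * u, y + s * v, z + s * w)) has_field_derivative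
     arr_deriv L (x + s0 * u, y + s0 * v, z + s0 * w) (u, v, w)) (at s0)"
proof (induction L)
  case (Cons l L)
  obtain a b c where l: "l = (a, b, c)"
    by (cases l)
  have "((\<lambda>s. lin l (x + s * u, y + s * v, z + s * w)) has_field_derivative lin l (u, v, w)) (at s0)"
    unfolding l lin_def by (auto intro!: derivative_eq_intros simp: algebra_simps)
  from DERIV_mult[OF this Cons.IH] show ?case
    by (simp add: algebra_simps)
qed simp

lemma pdx_arr_poly: "pdx (arr_poly L) p = arr_deriv L p (1, 0, 0)"
  using arr_poly_has_derivative[of L 0 1 _ 0 _ 0 "fst p", THEN DERIV_imp_deriv]
  by (cases p) (simp add: pdx_def)

lemma pdy_arr_poly: "pdy (arr_poly L) p = arr_deriv L p (0, 1, 0)"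
  using arr_poly_has_derivative[of L _ 0 0 1 _ 0 "fst (snd p)", THEN DERIV_imp_deriv]
  by (cases p) (simp add: pdy_def)

lemma pdz_arr_poly: "pdz (arr_poly L) p = arr_deriv L p (0, 0, 1)"
  using arr_poly_has_derivative[of L _ 0 _ 0 0 1 "snd (snd p)", THEN DERIV_imp_deriv]
  by (cases p) (simp add: pdz_def)

lemma arr_deriv_linear:
  "arr_deriv L p (u, v, w) =
     u * arr_deriv L p (1, 0, 0) + v * arr_deriv L p (0, 1, 0) + w * arr_deriv L p (0, 0, 1)"
proof (induction L)
  case (Cons l L)
  obtain a b c where "l = (a, b, c)"
    by (cases l)
  then show ?case
    by (simp add: Cons.IH lin_def distrib_left distrib_right mult.left_commute)
qed simp

lemma arr_deriv_scale: "arr_deriv L p (c * u, c * v, c * w) = c * arr_deriv L p (u, v, w)"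
  unfolding arr_deriv_linear[of L p "c * u"] arr_deriv_linear[of L p u] by (simp add: algebra_simps)

lemma arr_deriv_logarithmic:
  assumes "list_all2 (\<lambda>l k. lin l v = k * lin l p) L ks"
  shows "arr_deriv L p v = sum_list ks * arr_poly L p"
  using assms by (induction rule: list_all2_induct) (simp_all add: algebra_simps)

lemma arr_deriv_euler: "arr_deriv L p p = of_nat (length L) * arr_poly L p"
proof -
  have "list_all2 (\<lambda>l k. lin l p = k * lin l p) L (replicate (length L) 1)"
    by (simp add: list_all2_conv_all_nth)
  then show ?thesis
    by (simp add: arr_deriv_logarithmic sum_list_replicate)
qed

lemma arr_deriv_on_line:
  assumes "l \<in> set L" "lin l p = 0"
  shows "arr_deriv L p v = lin l v * arr_poly (remove1 l L) p"
  using assms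
proof (induction L)
  case (Cons m L)
  show ?case
  proof (cases "m = l")
    case False
    then have "arr_poly L p = 0"
      using Cons.prems by (simp add: arr_poly_def prod_list_zero_iff)
    with False Cons show ?thesis
      by simp
  qed (use Cons.prems in simp)
qed simp

fun arr_coeffs :: "pt list \<Rightarrow> coeffs" where
  "arr_coeffs [] = (\<lambda>t. if t = (0, 0, 0) then 1 else 0)"
| "arr_coeffs (l # L) = mul_lin l (arr_coeffs L)"

fun arr_deriv_coeffs :: "pt list \<Rightarrow> pt \<Rightarrow> coeffs" where
  "arr_deriv_coeffs [] v = (\<lambda>_. 0)"
| "arr_deriv_coeffs (l # L) v = (\<lambda>t. lin l v * arr_coeffs L t + mul_lin l (arr_deriv_coeffs L v) t)"

lemma hpoly_arr_coeffs: "hpoly (length L) (arr_coeffs L)"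
  by (induction L) (simp_all add: hpoly_def[of 0] hpoly_mul_lin)

lemma peval_arr_coeffs: "peval (length L) (arr_coeffs L) p = arr_poly L p"
proof (induction L)
  case Nil
  have "peval 0 (arr_coeffs []) p = (\<Sum>t\<in>monomials 0. arr_coeffs [] t * mon t p)"
    by (rule peval_monomials) (simp add: hpoly_def)
  then show ?case
    by (cases p) simp
qed (simp add: peval_mul_lin hpoly_arr_coeffs)

lemma arr_deriv_coeffs:
  "hpoly (length L) (arr_deriv_coeffs (l # L) v) \<and>
   peval (length L) (arr_deriv_coeffs (l # L) v) p = arr_deriv (l # L) p v"
proof (induction L arbitrary: l)
  case Nil
  have "hpoly 0 (arr_deriv_coeffs [l] v)"
    by (simp add: hpoly_def)
  moreover have "peval 0 (arr_deriv_coeffs [l] v) p = (\<Sum>t\<in>monomials 0. arr_deriv_coeffs [l] v t * mon t p)"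
    using calculation by (rule peval_monomials)
  ultimately show ?case
    by (cases p) simp
next
  case (Cons m L)
  then have IH: "hpoly (length L) (arr_deriv_coeffs (m # L) v)"
    "peval (length L) (arr_deriv_coeffs (m # L) v) p = arr_deriv (m # L) p v"
    by blast+
  have "hpoly (length (m # L)) (arr_deriv_coeffs (l # m # L) v)"
    using hpoly_cmult[OF hpoly_arr_coeffs[of "m # L"]] hpoly_mul_lin[OF IH(1)]
    by (simp only: arr_deriv_coeffs.simps length_Cons hpoly_add)
  moreover have "peval (length (m # L)) (arr_deriv_coeffs (l # m # L) v) p = arr_deriv (l # m # L) p v"
    using peval_arr_coeffs[of "m # L" p] peval_mul_lin[OF IH(1), of l p] IH(2)
    by (simp only: arr_deriv_coeffs.simps arr_deriv.simps length_Cons peval_add peval_cmult)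
  ultimately show ?case
    by blast
qed

section \<open>Jacobian syzygies of line arrangements\<close>

lemma syzygy_arr_poly_iff:
  "syzygy (arr_poly L) r a b c \<longleftrightarrow>
     hpoly r a \<and> hpoly r b \<and> hpoly r c \<and> (a \<noteq> (\<lambda>_. 0) \<or> b \<noteq> (\<lambda>_. 0) \<or> c \<noteq> (\<lambda>_. 0)) \<and>
     (\<forall>p. arr_deriv L p (peval r a p, peval r b p, peval r c p) = 0)"
proof -
  have "peval r a p * pdx (arr_poly L) p + peval r b p * pdy (arr_poly L) p
      + peval r c p * pdz (arr_poly L) p = arr_deriv L p (peval r a p, peval r b p, peval r c p)" for p
    unfolding pdx_arr_poly pdy_arr_poly pdz_arr_poly arr_deriv_linear[of L p "peval r a p"]
    by (simp add: mult.commute)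
  then show ?thesis
    by (simp add: syzygy_def)
qed

lemma syzygy_shift:
  assumes "syzygy f r a b c"
  shows "syzygy f (Suc r) (shift (1, 0, 0) a) (shift (1, 0, 0) b) (shift (1, 0, 0) c)"
proof -
  have h: "hpoly r a" "hpoly r b" "hpoly r c"
    using assms by (simp_all add: syzygy_def)
  have peval_x: "peval (Suc r) (shift (1, 0, 0) g) p = fst p * peval r g p" if "hpoly r g" for g p
    using peval_shift[OF that, of 1 0 0 p] by (cases p) simp
  have nonzero: "shift (1, 0, 0) g \<noteq> (\<lambda>_. 0)" if "g \<noteq> (\<lambda>_. 0)" for g
  proof
    assume "shift (1, 0, 0) g = (\<lambda>_. 0)"
    then have "shift (1, 0, 0) g (Suc i, j, k) = 0" for i j k
      by simp
    then have "g = (\<lambda>_. 0)"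
      by force
    with that show False ..
  qed
  have "peval (Suc r) (shift (1, 0, 0) a) p * pdx f p + peval (Suc r) (shift (1, 0, 0) b) p * pdy f p
      + peval (Suc r) (shift (1, 0, 0) c) p * pdz f p
      = fst p * (peval r a p * pdx f p + peval r b p * pdy f p + peval r c p * pdz f p)" for p
    unfolding peval_x[OF h(1)] peval_x[OF h(2)] peval_x[OF h(3)] by (simp add: algebra_simps)
  moreover have "shift (1, 0, 0) a \<noteq> (\<lambda>_. 0) \<or> shift (1, 0, 0) b \<noteq> (\<lambda>_. 0) \<or> shift (1, 0, 0) c \<noteq> (\<lambda>_. 0)"
    using assms nonzero unfolding syzygy_def by blast
  moreover have "hpoly (Suc r) (shift (1, 0, 0) g)" if "hpoly r g" for g
    using hpoly_shift[OF that, of 1 0 0] by simp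
  ultimately show ?thesis
    using assms h unfolding syzygy_def by (metis (no_types, lifting) mult_zero_right)
qed

lemma syzygy_higher_degree:
  assumes "syzygy f r a b c" "r \<le> n"
  shows "\<exists>a b c. syzygy f n a b c"
  using assms(2)
proof (induction n rule: dec_induct)
  case (step m)
  then show ?case
    using syzygy_shift by blast
qed (use assms(1) in blast)

lemma mdr_le:
  assumes "syzygy f r a b c"
  shows "mdr f \<le> r"
  unfolding mdr_def by (rule Least_le) (use assms in blast)

lemma mdr_gt:
  assumes "syzygy f r a b c" "\<And>a b c. \<not> syzygy f n a b c"
  shows "n < mdr f"
proof (rule ccontr)
  assume "\<not> n < mdr f"
  moreover have "\<exists>a b c. syzygy f (mdr f) a b c"
    unfolding mdr_def by (rule LeastI_ex) (use assms(1) in blast)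
  ultimately show False
    using syzygy_higher_degree assms(2) by (metis not_less)
qed

lemma koszul_syzygy:
  assumes "arr_deriv L p (1, 0, 0) \<noteq> 0"
  shows "\<exists>a b c. syzygy (arr_poly L) (length L - 1) a b c"
proof -
  obtain l L' where L: "L = l # L'"
    using assms by (cases L) auto
  define fx fy where "fx = arr_deriv_coeffs L (1, 0, 0)" and "fy = arr_deriv_coeffs L (0, 1, 0)"
  have h: "hpoly (length L') fx" "hpoly (length L') fy"
    and e: "\<And>q. peval (length L') fx q = arr_deriv L q (1, 0, 0)"
      "\<And>q. peval (length L') fy q = arr_deriv L q (0, 1, 0)"
    using arr_deriv_coeffs by (simp_all add: fx_def fy_def L)
  have "fx \<noteq> (\<lambda>_. 0)"
    using assms e(1)[of p] by (auto simp: peval_def)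
  then have "(\<lambda>t. - fx t) \<noteq> (\<lambda>_. 0)"
    by (metis (no_types) add.inverse_neutral minus_minus)
  moreover have "peval (length L') (\<lambda>t. - fx t) q = - arr_deriv L q (1, 0, 0)" for q
    using peval_cmult[of "length L'" "-1" fx q] e(1) by simp
  moreover have "peval (length L') (\<lambda>_. 0) q = 0" for q
    by (simp add: peval_def)
  ultimately have "syzygy (arr_poly L) (length L') fy (\<lambda>t. - fx t) (\<lambda>_. 0)"
    using h unfolding syzygy_arr_poly_iff
    by (auto simp: e arr_deriv_linear[of L _ "arr_deriv L _ (0, 1, 0)"] hpoly_def)
  then show ?thesis
    by (auto simp: L)
qed

lemma syzygy_vanishes_on_simple_points:
  assumes "syzygy (arr_poly L) r a b c" "l \<in> set L" "lin l p = 0" "mult_at L p = 1"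
  shows "lin l (peval r a p, peval r b p, peval r c p) = 0"
proof -
  have "arr_deriv L p (peval r a p, peval r b p, peval r c p) = 0"
    using assms(1) unfolding syzygy_arr_poly_iff by blast
  then show ?thesis
    using arr_deriv_on_line[OF assms(2,3)] arr_poly_remove1_nonzero[OF assms(2-4)] by simp
qed

lemma syzygy_by_logarithmic_derivative:
  assumes "hpoly (Suc r) a" "hpoly (Suc r) b" "hpoly (Suc r) c"
    and "a \<noteq> (\<lambda>_. 0) \<or> b \<noteq> (\<lambda>_. 0) \<or> c \<noteq> (\<lambda>_. 0)"
    and quotients: "list_all2 (\<lambda>l k. hpoly r k \<and> (\<forall>t\<in>monomials (Suc r).
      fst l * a t + fst (snd l) * b t + snd (snd l) * c t = mul_lin l k t)) L K"
    and "\<forall>t\<in>monomials r. (\<Sum>k\<leftarrow>K. k t) = 0"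
  shows "syzygy (arr_poly L) (Suc r) a b c"
proof -
  have "arr_deriv L p (peval (Suc r) a p, peval (Suc r) b p, peval (Suc r) c p) = 0" for p
  proof -
    have "list_all2 (\<lambda>l q. lin l (peval (Suc r) a p, peval (Suc r) b p, peval (Suc r) c p) = q * lin l p)
        L (map (\<lambda>k. peval r k p) K)"
    proof (rule list_all2_all_nthI)
      show "length L = length (map (\<lambda>k. peval r k p) K)"
        using quotients by (simp add: list_all2_lengthD)
    next
      fix i assume "i < length L"
      define l k where "l = L ! i" and "k = K ! i"
      have k: "hpoly r k" and quot: "\<forall>t\<in>monomials (Suc r).
          fst l * a t + fst (snd l) * b t + snd (snd l) * c t = mul_lin l k t"
        using quotients \<open>i < length L\<close> by (auto simp: list_all2_conv_all_nth l_def k_def)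
      have "lin l (peval (Suc r) a p, peval (Suc r) b p, peval (Suc r) c p)
          = (\<Sum>t\<in>monomials (Suc r). (fst l * a t + fst (snd l) * b t + snd (snd l) * c t) * mon t p)"
        by (cases l) (simp add: lin_def peval_monomials assms(1-3) sum_distrib_left
            distrib_right sum.distrib mult.assoc)
      also have "\<dots> = peval (Suc r) (mul_lin l k) p"
        using quot by (simp add: peval_monomials[OF hpoly_mul_lin[OF k]])
      also have "\<dots> = peval r k p * lin l p"
        by (simp add: peval_mul_lin[OF k])
      finally show "lin (L ! i) (peval (Suc r) a p, peval (Suc r) b p, peval (Suc r) c p)
          = map (\<lambda>k. peval r k p) K ! i * lin (L ! i) p"
        using \<open>i < length L\<close> quotients by (simp add: l_def k_def list_all2_lengthD)
    qed
    moreover have "(\<Sum>k\<leftarrow>K. peval r k p) = 0"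
    proof -
      have "\<forall>k\<in>set K. hpoly r k"
        using quotients by (auto simp: list_all2_conv_all_nth in_set_conv_nth)
      then have "(\<Sum>k\<leftarrow>K. peval r k p) = (\<Sum>t\<in>monomials r. (\<Sum>k\<leftarrow>K. k t) * mon t p)"
        by (induction K) (simp_all add: peval_monomials sum.distrib distrib_right)
      then show ?thesis
        using assms(6) by simp
    qed
    ultimately show ?thesis
      by (simp add: arr_deriv_logarithmic)
  qed
  then show ?thesis
    using assms(1-4) by (simp add: syzygy_arr_poly_iff)
qed

lemma euler_normalization:
  assumes "hpoly (Suc r) a" "hpoly (Suc r) b" "hpoly (Suc r) c"
  defines "h \<equiv> \<lambda>(i, j, k). a (Suc i, j, k)"
  shows "hpoly r h"
    and "hpoly (Suc r) (\<lambda>t. a t - shift (1, 0, 0) h t)"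
    and "hpoly (Suc r) (\<lambda>t. b t - shift (0, 1, 0) h t)"
    and "hpoly (Suc r) (\<lambda>t. c t - shift (0, 0, 1) h t)"
    and "a (Suc i, j, k) - shift (1, 0, 0) h (Suc i, j, k) = 0"
    and "peval (Suc r) (\<lambda>t. a t - shift (1, 0, 0) h t) p = peval (Suc r) a p - fst p * peval r h p"
    and "peval (Suc r) (\<lambda>t. b t - shift (0, 1, 0) h t) p = peval (Suc r) b p - fst (snd p) * peval r h p"
    and "peval (Suc r) (\<lambda>t. c t - shift (0, 0, 1) h t) p = peval (Suc r) c p - snd (snd p) * peval r h p"
proof -
  show h: "hpoly r h"
    using assms(1) unfolding hpoly_def h_def by fastforce
  have shifted: "hpoly (Suc r) (shift m h)" if "m = (1, 0, 0) \<or> m = (0, 1, 0) \<or> m = (0, 0, 1)" for m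
    using that hpoly_shift[OF h, of 1 0 0] hpoly_shift[OF h, of 0 1 0] hpoly_shift[OF h, of 0 0 1] by auto
  show "hpoly (Suc r) (\<lambda>t. a t - shift (1, 0, 0) h t)" "hpoly (Suc r) (\<lambda>t. b t - shift (0, 1, 0) h t)"
    "hpoly (Suc r) (\<lambda>t. c t - shift (0, 0, 1) h t)"
    using assms(1-3) shifted by (auto intro: hpoly_diff)
  show "a (Suc i, j, k) - shift (1, 0, 0) h (Suc i, j, k) = 0"
    by (simp add: h_def)
  show "peval (Suc r) (\<lambda>t. a t - shift (1, 0, 0) h t) p = peval (Suc r) a p - fst p * peval r h p"
    "peval (Suc r) (\<lambda>t. b t - shift (0, 1, 0) h t) p = peval (Suc r) b p - fst (snd p) * peval r h p"
    "peval (Suc r) (\<lambda>t. c t - shift (0, 0, 1) h t) p = peval (Suc r) c p - snd (snd p) * peval r h p"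
    using peval_shift[OF h, of 1 0 0 p] peval_shift[OF h, of 0 1 0 p] peval_shift[OF h, of 0 0 1 p]
    by (cases p; simp add: peval_diff)+
qed

section \<open>Certified vanishing of coefficients\<close>

definition gdot :: "complex \<Rightarrow> gauss list \<Rightarrow> (nat \<Rightarrow> complex) \<Rightarrow> complex" where
  "gdot e r V = (\<Sum>k<length r. of_gauss e (r ! k) * V k)"

fun combine :: "nat \<Rightarrow> gauss list list \<Rightarrow> (nat \<times> gauss) list \<Rightarrow> gauss list" where
  "combine n rs [] = replicate n (0, 0)"
| "combine n rs ((i, g) # cs) = map2 gadd (map (gmul g) (rs ! i)) (combine n rs cs)"

definition certifies :: "nat \<Rightarrow> gauss list list \<Rightarrow> nat \<Rightarrow> gauss \<times> (nat \<times> gauss) list \<Rightarrow> bool" where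
  "certifies n rs k cert \<longleftrightarrow> (case cert of (c, cs) \<Rightarrow>
     c \<noteq> (0, 0) \<and> list_all (\<lambda>(i, _). i < length rs) cs \<and>
     combine n rs cs = map (\<lambda>j. if j = k then c else (0, 0)) [0..<n])"

definition certifies_all :: "gauss list list \<Rightarrow> (gauss \<times> (nat \<times> gauss) list) list \<Rightarrow> bool" where
  "certifies_all rs C \<longleftrightarrow> list_all (\<lambda>r. length r = length C) rs \<and>
     list_all (\<lambda>(k, cert). certifies (length C) rs k cert) (List.enumerate 0 C)"

context
  fixes e :: complex
  assumes e: "e\<^sup>2 = -1"
begin

lemma gdot_map2_gadd: "length r = length s \<Longrightarrow> gdot e (map2 gadd r s) V = gdot e r V + gdot e s V"
  by (simp add: gdot_def of_gauss_gadd distrib_right sum.distrib)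

lemma gdot_gmul: "gdot e (map (gmul g) r) V = of_gauss e g * gdot e r V"
  by (simp add: gdot_def of_gauss_gmul[OF e] sum_distrib_left mult.assoc)

lemma length_combine:
  "\<forall>r\<in>set rs. length r = n \<Longrightarrow> list_all (\<lambda>(i, _). i < length rs) cs \<Longrightarrow> length (combine n rs cs) = n"
  by (induction n rs cs rule: combine.induct) auto

lemma gdot_combine:
  assumes "\<forall>r\<in>set rs. length r = n \<and> gdot e r V = 0" "list_all (\<lambda>(i, _). i < length rs) cs"
  shows "gdot e (combine n rs cs) V = 0"
  using assms
proof (induction n rs cs rule: combine.induct)
  case (2 n rs i g cs)
  then have "rs ! i \<in> set rs"
    by simp
  with 2 show ?case
    by (simp add: gdot_map2_gadd gdot_gmul length_combine)
qed (simp add: gdot_def)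

lemma certified_vanishing:
  assumes "certifies_all rs C" "\<forall>r\<in>set rs. gdot e r V = 0" "k < length C"
  shows "V k = 0"
proof -
  have "(k, C ! k) \<in> set (List.enumerate 0 C)"
    using assms(3) by (simp add: in_set_enumerate_eq)
  then have "certifies (length C) rs k (C ! k)"
    using assms(1) by (auto simp: certifies_all_def list_all_iff)
  then obtain c cs where cert: "certifies (length C) rs k (c, cs)"
    by (cases "C ! k") auto
  have "gdot e (map (\<lambda>j. if j = k then c else (0, 0)) [0..<length C]) V
      = (\<Sum>j<length C. of_gauss e (if j = k then c else (0, 0)) * V j)"
    unfolding gdot_def by (rule sum.cong) auto
  also have "\<dots> = (\<Sum>j<length C. if j = k then of_gauss e c * V j else 0)"
    by (rule sum.cong) (auto simp: of_gauss_def)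
  also have "\<dots> = of_gauss e c * V k"
    using assms(3) by simp
  finally have "gdot e (map (\<lambda>j. if j = k then c else (0, 0)) [0..<length C]) V = of_gauss e c * V k" .
  moreover have "gdot e (combine (length C) rs cs) V = 0"
    using assms(1,2) cert by (intro gdot_combine) (auto simp: certifies_all_def certifies_def list_all_iff)
  ultimately show ?thesis
    using cert of_gauss_eq_0_iff[OF e] by (simp add: certifies_def)
qed

end

definition coord :: "nat \<Rightarrow> 'a \<times> 'a \<times> 'a \<Rightarrow> 'a" where
  "coord j v = (if j = 0 then fst v else if j = 1 then fst (snd v) else snd (snd v))"

definition field_indices :: "nat \<Rightarrow> (nat \<times> nat \<times> nat \<times> nat) list" where
  "field_indices r = List.product [0..<3] (monomial_list r)"

definition field_coeff :: "coeffs \<times> coeffs \<times> coeffs \<Rightarrow> nat \<times> nat \<times> nat \<times> nat \<Rightarrow> complex" where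
  "field_coeff \<theta> \<kappa> = coord (fst \<kappa>) \<theta> (snd \<kappa>)"

definition row_entry :: "gpt \<times> gpt \<Rightarrow> nat \<times> nat \<times> nat \<times> nat \<Rightarrow> gauss" where
  "row_entry lp \<kappa> = gmul (coord (fst \<kappa>) (fst lp)) (gmon (snd \<kappa>) (snd lp))"

lemma distinct_field_indices: "distinct (field_indices r)"
  by (simp add: field_indices_def distinct_product distinct_monomial_list)

lemma set_field_indices: "set (field_indices r) = {0, 1, 2} \<times> monomials r"
  by (auto simp: field_indices_def set_monomial_list)

lemma lin_peval:
  assumes "hpoly r a" "hpoly r b" "hpoly r c"
  shows "lin l (peval r a p, peval r b p, peval r c p)
    = (\<Sum>\<kappa>\<leftarrow>field_indices r. coord (fst \<kappa>) l * mon (snd \<kappa>) p * field_coeff (a, b, c) \<kappa>)"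
proof -
  have "(\<Sum>\<kappa>\<leftarrow>field_indices r. coord (fst \<kappa>) l * mon (snd \<kappa>) p * field_coeff (a, b, c) \<kappa>)
      = (\<Sum>j\<in>{0, 1, 2}. \<Sum>t\<in>monomials r. coord j l * mon t p * coord j (a, b, c) t)"
    by (simp add: sum.distinct_set_conv_list[OF distinct_field_indices, symmetric] set_field_indices
        sum.cartesian_product split_def field_coeff_def)
  also have "\<dots> = lin l (peval r a p, peval r b p, peval r c p)"
    by (cases l) (simp add: peval_monomials[OF assms(1)] peval_monomials[OF assms(2)]
        peval_monomials[OF assms(3)] lin_def coord_def sum_distrib_left mult_ac)
  finally show ?thesis ..
qed

lemma of_gauss_row_entry:
  assumes "e\<^sup>2 = -1"
  shows "of_gauss e (row_entry (l, p) \<kappa>) = coord (fst \<kappa>) (of_gpt e l) * mon (snd \<kappa>) (of_gpt e p)"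
proof -
  have "of_gauss e (coord j l) = coord j (of_gpt e l)" for j
    by (simp add: coord_def of_gpt_def)
  then show ?thesis
    by (simp add: row_entry_def of_gauss_gmul[OF assms] mon_of_gpt[OF assms])
qed

lemma certified_vanishing_coefficients:
  assumes e: "e\<^sup>2 = -1" and h: "hpoly r a" "hpoly r b" "hpoly r c"
    and tangent: "\<forall>(l, p)\<in>set P.
      lin (of_gpt e l) (peval r a (of_gpt e p), peval r b (of_gpt e p), peval r c (of_gpt e p)) = 0"
    and Ks: "distinct Ks" "set Ks \<subseteq> set (field_indices r)"
    and others: "\<forall>\<kappa>\<in>set (field_indices r) - set Ks.
      field_coeff (a, b, c) \<kappa> = 0 \<or> (\<forall>lp\<in>set P. row_entry lp \<kappa> = (0, 0))"
    and cert: "certifies_all (map (\<lambda>lp. map (row_entry lp) Ks) P) C" "length C = length Ks"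
  shows "\<forall>\<kappa>\<in>set Ks. field_coeff (a, b, c) \<kappa> = 0"
proof -
  define V where "V k = field_coeff (a, b, c) (Ks ! k)" for k
  have "gdot e (map (row_entry lp) Ks) V = 0" if "lp \<in> set P" for lp
  proof -
    obtain l p where lp: "lp = (l, p)"
      by (cases lp)
    let ?term = "\<lambda>\<kappa>. of_gauss e (row_entry (l, p) \<kappa>) * field_coeff (a, b, c) \<kappa>"
    have "gdot e (map (row_entry lp) Ks) V = (\<Sum>\<kappa>\<in>set Ks. ?term \<kappa>)"
      by (simp add: gdot_def V_def lp sum_list_sum_nth atLeast0LessThan sum.distinct_set_conv_list[OF Ks(1)])
    also have "\<dots> = (\<Sum>\<kappa>\<in>set (field_indices r). ?term \<kappa>)"
      using others that Ks(2) by (intro sum.mono_neutral_left) (auto simp: of_gauss_def lp)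
    also have "\<dots> = lin (of_gpt e l) (peval r a (of_gpt e p), peval r b (of_gpt e p), peval r c (of_gpt e p))"
      by (simp add: sum.distinct_set_conv_list[OF distinct_field_indices] lin_peval[OF h]
          of_gauss_row_entry[OF e] mult.assoc)
    finally show ?thesis
      using tangent that by (auto simp: lp)
  qed
  then have "V k = 0" if "k < length Ks" for k
    using certified_vanishing[OF e cert(1), of V k] that cert(2) by auto
  then show ?thesis
    unfolding V_def by (metis in_set_conv_nth)
qed

section \<open>Multiple points of a line arrangement\<close>

fun cross :: "pt \<Rightarrow> pt \<Rightarrow> pt" where
  "cross (a1, a2, a3) (b1, b2, b3) = (a2 * b3 - a3 * b2, a3 * b1 - a1 * b3, a1 * b2 - a2 * b1)"

fun pt_scale :: "complex \<Rightarrow> pt \<Rightarrow> pt" where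
  "pt_scale c (x, y, z) = (c * x, c * y, c * z)"

lemma lin_scale: "lin l (pt_scale c p) = c * lin l p"
  by (cases l; cases p) (simp add: lin_def algebra_simps)

lemma cross_common_point:
  assumes "lin l p = 0" "lin m p = 0"
  shows "cross p (cross l m) = (0, 0, 0)"
proof -
  obtain l1 l2 l3 m1 m2 m3 p1 p2 p3 where v: "l = (l1, l2, l3)" "m = (m1, m2, m3)" "p = (p1, p2, p3)"
    by (cases l; cases m; cases p)
  have "cross p (cross l m) = (l1 * lin m p - m1 * lin l p, l2 * lin m p - m2 * lin l p, l3 * lin m p - m3 * lin l p)"
    by (simp add: v lin_def algebra_simps)
  with assms show ?thesis
    by simp
qed

lemma cross_zero_imp_scale:
  assumes "cross p v = (0, 0, 0)" "v \<noteq> (0, 0, 0)"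
  shows "\<exists>c. p = pt_scale c v"
proof -
  obtain p1 p2 p3 v1 v2 v3 where pv: "p = (p1, p2, p3)" "v = (v1, v2, v3)"
    by (cases p; cases v)
  have par: "p2 * v3 = p3 * v2" "p3 * v1 = p1 * v3" "p1 * v2 = p2 * v1"
    using assms(1) by (simp_all add: pv)
  define n where "n = cnj v1 * v1 + cnj v2 * v2 + cnj v3 * v3"
  define d where "d = cnj v1 * p1 + cnj v2 * p2 + cnj v3 * p3"
  have "n = of_real ((cmod v1)\<^sup>2 + (cmod v2)\<^sup>2 + (cmod v3)\<^sup>2)"
    unfolding of_real_add complex_norm_square n_def by (simp only: mult.commute)
  moreover have "(cmod v1)\<^sup>2 + (cmod v2)\<^sup>2 + (cmod v3)\<^sup>2 \<noteq> 0"
    using assms(2) by (simp add: pv add_nonneg_eq_0_iff)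
  ultimately have "n \<noteq> 0"
    by (metis of_real_eq_0_iff)
  have "n * p1 = d * v1" "n * p2 = d * v2" "n * p3 = d * v3"
  proof -
    have "n * p1 - d * v1 = cnj v2 * (p1 * v2 - p2 * v1) - cnj v3 * (p3 * v1 - p1 * v3)"
      "n * p2 - d * v2 = cnj v3 * (p2 * v3 - p3 * v2) - cnj v1 * (p1 * v2 - p2 * v1)"
      "n * p3 - d * v3 = cnj v1 * (p3 * v1 - p1 * v3) - cnj v2 * (p2 * v3 - p3 * v2)"
      by (simp_all add: n_def d_def algebra_simps)
    with par show "n * p1 = d * v1" "n * p2 = d * v2" "n * p3 = d * v3"
      by simp_all
  qed
  with \<open>n \<noteq> 0\<close> have "p = pt_scale (d / n) v"
    by (simp add: pv field_simps)
  then show ?thesis ..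
qed

lemma cross_self: "cross v v = (0, 0, 0)"
  by (cases v) (simp add: algebra_simps)

lemma cross_scale: "cross (pt_scale c v) w = pt_scale c (cross v w)"
  by (cases v; cases w) (simp add: algebra_simps)

lemma cross_swap: "cross w v = pt_scale (-1) (cross v w)"
  by (cases v; cases w) (simp add: algebra_simps)

lemma pt_scale_eq_0_iff: "pt_scale c v = (0, 0, 0) \<longleftrightarrow> c = 0 \<or> v = (0, 0, 0)"
  by (cases v) auto

lemma proj_pt_scale:
  assumes "c \<noteq> 0"
  shows "proj_pt (pt_scale c q) = proj_pt q"
proof -
  obtain x y z where q: "q = (x, y, z)"
    by (cases q)
  have "\<exists>k'. (k * (c * x), k * (c * y), k * (c * z)) = (k' * x, k' * y, k' * z)" for k
    by (rule exI[of _ "k * c"]) simp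
  moreover have "\<exists>k'. (k * x, k * y, k * z) = (k' * (c * x), k' * (c * y), k' * (c * z))" for k
    by (rule exI[of _ "k / c"]) (simp add: assms)
  ultimately show ?thesis
    unfolding proj_pt_def q pt_scale.simps prod.case by blast
qed

lemma proj_pt_eq_imp_scale: "proj_pt p = proj_pt q \<Longrightarrow> \<exists>c. p = pt_scale c q"
proof -
  assume "proj_pt p = proj_pt q"
  moreover have "p \<in> proj_pt p"
    by (cases p) (auto simp: proj_pt_def intro: exI[of _ 1])
  ultimately show ?thesis
    by (cases q) (auto simp: proj_pt_def)
qed

lemma mult_at_scale: "c \<noteq> 0 \<Longrightarrow> mult_at L (pt_scale c q) = mult_at L q"
  by (simp add: mult_at_def lin_scale)

lemma two_lines_through:
  assumes "2 \<le> mult_at L p"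
  shows "\<exists>i j. i < j \<and> j < length L \<and> lin (L ! i) p = 0 \<and> lin (L ! j) p = 0"
  using assms unfolding mult_at_def
proof (induction L)
  case (Cons l L)
  show ?case
  proof (cases "lin l p = 0")
    case True
    then have "filter (\<lambda>m. lin m p = 0) L \<noteq> []"
      using Cons.prems by auto
    then obtain m where "m \<in> set L" "lin m p = 0"
      by (auto simp: filter_empty_conv)
    then obtain j where "j < length L" "lin (L ! j) p = 0"
      by (auto simp: in_set_conv_nth)
    with True show ?thesis
      by (intro exI[of _ 0] exI[of _ "Suc j"]) auto
  next
    case False
    then obtain i j where "i < j \<and> j < length L \<and> lin (L ! i) p = 0 \<and> lin (L ! j) p = 0"
      using Cons by auto
    then show ?thesis
      by (intro exI[of _ "Suc i"] exI[of _ "Suc j"]) auto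
  qed
qed simp


lemma proportional_imp_cross: "proportional l m \<Longrightarrow> cross l m = (0, 0, 0)"
  by (cases l) (auto simp: proportional_def algebra_simps)

lemma line_arrangementI:
  assumes "\<forall>l\<in>set L. l \<noteq> (0, 0, 0)"
    and "\<forall>i<length L. \<forall>j<length L. i \<noteq> j \<longrightarrow> cross (L ! i) (L ! j) \<noteq> (0, 0, 0)"
  shows "line_arrangement L"
  unfolding line_arrangement_def using assms proportional_imp_cross by blast

lemma n_pts_by_representatives:
  assumes meet: "\<forall>i<length L. \<forall>j<length L. i \<noteq> j \<longrightarrow> (\<exists>q\<in>set Q. cross (cross (L ! i) (L ! j)) q = (0, 0, 0))"
    and lines: "\<forall>i<length L. \<forall>j<length L. i \<noteq> j \<longrightarrow> cross (L ! i) (L ! j) \<noteq> (0, 0, 0)"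
    and reps: "\<forall>q\<in>set Q. q \<noteq> (0, 0, 0) \<and> 2 \<le> mult_at L q"
    and apart: "\<forall>q\<in>set Q. \<forall>q'\<in>set Q. q \<noteq> q' \<longrightarrow> cross q q' \<noteq> (0, 0, 0)"
    and "distinct Q" "2 \<le> i"
  shows "n_pts L i = length (filter (\<lambda>q. mult_at L q = i) Q)"
proof -
  have rep: "\<exists>q\<in>set Q. \<exists>c. c \<noteq> 0 \<and> p = pt_scale c q"
    if p: "p \<noteq> (0, 0, 0)" "2 \<le> mult_at L p" for p
  proof -
    obtain a b where ab: "a < b" "b < length L" "lin (L ! a) p = 0" "lin (L ! b) p = 0"
      using two_lines_through[OF p(2)] by blast
    define v where "v = cross (L ! a) (L ! b)"
    have "v \<noteq> (0, 0, 0)"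
      using lines[rule_format, of a b] ab by (simp add: v_def)
    obtain q where q: "q \<in> set Q" "cross v q = (0, 0, 0)"
      using meet[rule_format, of a b] ab by (auto simp: v_def)
    obtain c where c: "p = pt_scale c v"
      using cross_zero_imp_scale[OF cross_common_point[OF ab(3,4), folded v_def] \<open>v \<noteq> _\<close>] by blast
    obtain d where d: "q = pt_scale d v"
      using cross_zero_imp_scale[of q v] q(2) \<open>v \<noteq> _\<close> cross_swap[of q v] by auto
    have "c \<noteq> 0" "d \<noteq> 0"
      using p(1) reps q(1) c d by (auto simp: pt_scale_eq_0_iff)
    then have "p = pt_scale (c / d) q"
      by (cases v) (simp add: c d)
    moreover have "c / d \<noteq> 0"
      using \<open>c \<noteq> 0\<close> \<open>d \<noteq> 0\<close> by simp
    ultimately show ?thesis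
      using q(1) by blast
  qed
  have reps_eq: "{proj_pt p |p. p \<noteq> (0, 0, 0) \<and> mult_at L p = i}
      = proj_pt ` {q \<in> set Q. mult_at L q = i}"
  proof (intro equalityI subsetI)
    fix X assume "X \<in> {proj_pt p |p. p \<noteq> (0, 0, 0) \<and> mult_at L p = i}"
    then obtain p where p: "X = proj_pt p" "p \<noteq> (0, 0, 0)" "mult_at L p = i"
      by blast
    then obtain q c where "q \<in> set Q" "c \<noteq> 0" "p = pt_scale c q"
      using rep \<open>2 \<le> i\<close> by blast
    with p show "X \<in> proj_pt ` {q \<in> set Q. mult_at L q = i}"
      by (auto simp: mult_at_scale proj_pt_scale)
  next
    fix X assume "X \<in> proj_pt ` {q \<in> set Q. mult_at L q = i}"
    with reps show "X \<in> {proj_pt p |p. p \<noteq> (0, 0, 0) \<and> mult_at L p = i}"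
      by blast
  qed
  have "inj_on proj_pt (set Q)"
  proof (rule inj_onI)
    fix q q' assume "q \<in> set Q" "q' \<in> set Q" "proj_pt q = proj_pt q'"
    then obtain c where "q = pt_scale c q'"
      using proj_pt_eq_imp_scale by blast
    then have "cross q q' = (0, 0, 0)"
      by (simp add: cross_scale cross_self del: cross.simps pt_scale.simps) (cases q', simp)
    with apart \<open>q \<in> set Q\<close> \<open>q' \<in> set Q\<close> show "q = q'"
      by blast
  qed
  then have "card (proj_pt ` {q \<in> set Q. mult_at L q = i}) = card {q \<in> set Q. mult_at L q = i}"
    by (intro card_image) (auto intro: inj_on_subset)
  also have "\<dots> = length (filter (\<lambda>q. mult_at L q = i) Q)"
    using \<open>distinct Q\<close> by (simp add: distinct_length_filter Collect_conj_eq Int_commute)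
  finally show ?thesis
    unfolding n_pts_def reps_eq .
qed

fun gcross :: "gpt \<Rightarrow> gpt \<Rightarrow> gpt" where
  "gcross (a1, a2, a3) (b1, b2, b3) =
     (gsub (gmul a2 b3) (gmul a3 b2), gsub (gmul a3 b1) (gmul a1 b3), gsub (gmul a1 b2) (gmul a2 b1))"

abbreviation gzero :: gpt where
  "gzero \<equiv> ((0, 0), (0, 0), (0, 0))"

context
  fixes e :: complex
  assumes e: "e\<^sup>2 = -1"
begin

lemma of_gpt_gcross: "of_gpt e (gcross a b) = cross (of_gpt e a) (of_gpt e b)"
  by (cases a; cases b) (simp add: of_gpt_def of_gauss_gsub of_gauss_gmul[OF e])

lemma of_gpt_eq_0_iff: "of_gpt e v = (0, 0, 0) \<longleftrightarrow> v = gzero"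
  by (cases v) (auto simp: of_gpt_def of_gauss_eq_0_iff[OF e])

end

definition lists_multiple_points :: "gpt list \<Rightarrow> gpt list \<Rightarrow> bool" where
  "lists_multiple_points L Q \<longleftrightarrow>
     list_all (\<lambda>l. l \<noteq> gzero) L \<and> distinct Q \<and>
     list_all (\<lambda>q. q \<noteq> gzero \<and> 2 \<le> gmult L q) Q \<and>
     list_all (\<lambda>q. list_all (\<lambda>q'. q \<noteq> q' \<longrightarrow> gcross q q' \<noteq> gzero) Q) Q \<and>
     list_all (\<lambda>i. list_all (\<lambda>j. i \<noteq> j \<longrightarrow> gcross (L ! i) (L ! j) \<noteq> gzero \<and>
       list_ex (\<lambda>q. gcross (gcross (L ! i) (L ! j)) q = gzero) Q) [0..<length L]) [0..<length L]"

lemma lists_multiple_points_sound: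
  assumes e: "e\<^sup>2 = -1" and chk: "lists_multiple_points L Q"
  shows "line_arrangement (map (of_gpt e) L)"
    and "2 \<le> i \<Longrightarrow> n_pts (map (of_gpt e) L) i = length (filter (\<lambda>q. gmult L q = i) Q)"
proof -
  let ?L = "map (of_gpt e) L" and ?Q = "map (of_gpt e) Q"
  have lines: "\<forall>i<length ?L. \<forall>j<length ?L. i \<noteq> j \<longrightarrow> cross (?L ! i) (?L ! j) \<noteq> (0, 0, 0)"
    and meet: "\<forall>i<length ?L. \<forall>j<length ?L. i \<noteq> j \<longrightarrow> (\<exists>q\<in>set ?Q. cross (cross (?L ! i) (?L ! j)) q = (0, 0, 0))"
    using chk by (auto simp: lists_multiple_points_def list_all_iff list_ex_iff
        of_gpt_gcross[OF e, symmetric] of_gpt_eq_0_iff[OF e])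
  show "line_arrangement ?L"
    using chk lines by (intro line_arrangementI) (auto simp: lists_multiple_points_def list_all_iff of_gpt_eq_0_iff[OF e])
  assume "2 \<le> i"
  have apart: "\<forall>q\<in>set ?Q. \<forall>q'\<in>set ?Q. q \<noteq> q' \<longrightarrow> cross q q' \<noteq> (0, 0, 0)"
    using chk by (auto simp: lists_multiple_points_def list_all_iff of_gpt_gcross[OF e, symmetric] of_gpt_eq_0_iff[OF e])
  have reps: "\<forall>q\<in>set ?Q. q \<noteq> (0, 0, 0) \<and> 2 \<le> mult_at ?L q"
    using chk by (auto simp: lists_multiple_points_def list_all_iff of_gpt_eq_0_iff[OF e] mult_at_of_gpt[OF e])
  have "inj_on (of_gpt e) (set Q)"
  proof (rule inj_onI)
    fix q q' assume "q \<in> set Q" "q' \<in> set Q" "of_gpt e q = of_gpt e q'"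
    then have "of_gpt e (gcross q q') = (0, 0, 0)"
      by (simp add: of_gpt_gcross[OF e] cross_self)
    with chk \<open>q \<in> set Q\<close> \<open>q' \<in> set Q\<close> show "q = q'"
      by (auto simp: lists_multiple_points_def list_all_iff of_gpt_eq_0_iff[OF e])
  qed
  then have "distinct ?Q"
    using chk by (simp add: lists_multiple_points_def distinct_map)
  from n_pts_by_representatives[OF meet lines reps apart this \<open>2 \<le> i\<close>]
  show "n_pts ?L i = length (filter (\<lambda>q. gmult L q = i) Q)"
    by (simp add: filter_map comp_def mult_at_of_gpt[OF e])
qed

lemma same_weak_comb_by_multiple_points:
  assumes e: "e\<^sup>2 = -1" and "lists_multiple_points L Q" "lists_multiple_points M R"
    and "length L = length M" "map (gmult L) Q = map (gmult M) R"
  shows "same_weak_comb (map (of_gpt e) L) (map (of_gpt e) M)"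
proof -
  have "length (filter (\<lambda>q. gmult L q = i) Q) = length (filter (\<lambda>q. gmult M q = i) R)" for i
    using arg_cong[OF assms(5), of "\<lambda>ns. length (filter (\<lambda>n. n = i) ns)"] by (simp add: filter_map comp_def)
  then show ?thesis
    using lists_multiple_points_sound(2)[OF e assms(2)] lists_multiple_points_sound(2)[OF e assms(3)] assms(4)
    by (simp add: same_weak_comb_def)
qed

section \<open>The arrangement L9\<close>

definition L9 :: "gpt list" where
  "L9 = [((0, 0), (1, 0), (0, 0)), ((0, 0), (1, 0), (-1, 0)), ((0, 0), (1, 0), (1, 0)),
     ((-1, 0), (1, 0), (0, 0)), ((1, 0), (1, 0), (0, 0)), ((-1, 0), (1, 0), (-2, 0)),
     ((-1, 0), (1, 0), (2, 0)), ((1, 0), (1, 0), (-2, 0)), ((1, 0), (1, 0), (2, 0))]"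

definition L9_multiple_points :: "gpt list" where
  "L9_multiple_points = [((3, 0), (1, 0), (1, 0)), ((3, 0), (-1, 0), (-1, 0)), ((3, 0), (1, 0), (-1, 0)),
     ((3, 0), (-1, 0), (1, 0)), ((0, 0), (2, 0), (1, 0)), ((0, 0), (2, 0), (-1, 0)),
     ((1, 0), (0, 0), (0, 0)), ((0, 0), (0, 0), (1, 0)), ((2, 0), (0, 0), (-1, 0)),
     ((2, 0), (0, 0), (1, 0)), ((1, 0), (1, 0), (1, 0)), ((1, 0), (-1, 0), (-1, 0)),
     ((1, 0), (1, 0), (-1, 0)), ((1, 0), (-1, 0), (1, 0)), ((1, 0), (1, 0), (0, 0)),
     ((1, 0), (-1, 0), (0, 0))]"

lemma L9_lists_multiple_points: "lists_multiple_points L9 L9_multiple_points"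
  by code_simp

definition L9_syzygy :: "coeffs \<times> coeffs \<times> coeffs" where
  "L9_syzygy =
    (poly_of [((0, 2, 2), -36), ((0, 4, 0), 9), ((2, 0, 2), 12), ((4, 0, 0), -1)],
     poly_of [((1, 1, 2), -24), ((1, 3, 0), 6), ((3, 1, 0), 2)],
     poly_of [((1, 2, 1), -18), ((3, 0, 1), 2)])"

definition L9_quotients :: "coeffs list" where
  "L9_quotients = map poly_of
    [[((1, 0, 2), -24), ((1, 2, 0), 6), ((3, 0, 0), 2)],
     [((1, 1, 1), 24), ((1, 2, 0), 6), ((3, 0, 0), 2)],
     [((1, 1, 1), -24), ((1, 2, 0), 6), ((3, 0, 0), 2)],
     [((0, 1, 2), 36), ((0, 3, 0), -9), ((1, 0, 2), 12), ((1, 2, 0), -3), ((2, 1, 0), -3), ((3, 0, 0), -1)],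
     [((0, 1, 2), -36), ((0, 3, 0), 9), ((1, 0, 2), 12), ((1, 2, 0), -3), ((2, 1, 0), 3), ((3, 0, 0), -1)],
     [((0, 2, 1), -18), ((0, 3, 0), -9), ((1, 1, 1), 12), ((1, 2, 0), -3), ((2, 0, 1), 6), ((2, 1, 0), -3), ((3, 0, 0), -1)],
     [((0, 2, 1), 18), ((0, 3, 0), -9), ((1, 1, 1), -12), ((1, 2, 0), -3), ((2, 0, 1), -6), ((2, 1, 0), -3), ((3, 0, 0), -1)],
     [((0, 2, 1), 18), ((0, 3, 0), 9), ((1, 1, 1), 12), ((1, 2, 0), -3), ((2, 0, 1), -6), ((2, 1, 0), 3), ((3, 0, 0), -1)],
     [((0, 2, 1), -18), ((0, 3, 0), 9), ((1, 1, 1), -12), ((1, 2, 0), -3), ((2, 0, 1), 6), ((2, 1, 0), 3), ((3, 0, 0), -1)]]"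

lemma L9_quartic_syzygy:
  "syzygy (arr_poly [(0, 1, 0), (0, 1, -1), (0, 1, 1), (-1, 1, 0), (1, 1, 0),
      (-1, 1, -2), (-1, 1, 2), (1, 1, -2), (1, 1, 2)]) 4
     (fst L9_syzygy) (fst (snd L9_syzygy)) (snd (snd L9_syzygy))"
proof -
  have "syzygy (arr_poly [(0, 1, 0), (0, 1, -1), (0, 1, 1), (-1, 1, 0), (1, 1, 0),
      (-1, 1, -2), (-1, 1, 2), (1, 1, -2), (1, 1, 2)]) (Suc 3)
     (fst L9_syzygy) (fst (snd L9_syzygy)) (snd (snd L9_syzygy))"
  proof (rule syzygy_by_logarithmic_derivative[where K = L9_quotients])
    show "hpoly (Suc 3) (fst L9_syzygy)" "hpoly (Suc 3) (fst (snd L9_syzygy))" "hpoly (Suc 3) (snd (snd L9_syzygy))"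
      by (simp_all add: L9_syzygy_def hpoly_poly_of monomials_def)
    show "fst L9_syzygy \<noteq> (\<lambda>_. 0) \<or> fst (snd L9_syzygy) \<noteq> (\<lambda>_. 0) \<or> snd (snd L9_syzygy) \<noteq> (\<lambda>_. 0)"
      using poly_of_nonzero[of _ "(4, 0, 0)" "-1"] by (simp add: L9_syzygy_def)
    show "\<forall>t\<in>monomials 3. (\<Sum>k\<leftarrow>L9_quotients. k t) = 0"
      by (simp add: L9_quotients_def poly_of_def monomial_list_def upt_rec flip: set_monomial_list)
    show "list_all2 (\<lambda>l k. hpoly 3 k \<and> (\<forall>t\<in>monomials (Suc 3).
        fst l * fst L9_syzygy t + fst (snd l) * fst (snd L9_syzygy) t + snd (snd l) * snd (snd L9_syzygy) t
        = mul_lin l k t))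
      [(0, 1, 0), (0, 1, -1), (0, 1, 1), (-1, 1, 0), (1, 1, 0), (-1, 1, -2), (-1, 1, 2), (1, 1, -2), (1, 1, 2)]
      L9_quotients"
      by (simp add: L9_quotients_def L9_syzygy_def hpoly_poly_of mul_lin_def poly_of_def monomial_list_def upt_rec
          flip: set_monomial_list)
  qed
  then show ?thesis
    by (simp add: numeral_eq_Suc)
qed

section \<open>The arrangement L9'\<close>

definition L9_prime :: "gpt list" where
  "L9_prime = [((1, 0), (0, 0), (0, 0)), ((0, 0), (1, 0), (0, 0)), ((0, 0), (0, 0), (1, 0)),
     ((1, 0), (1, 0), (0, 0)), ((1, 0), (0, 0), (1, 0)), ((0, 0), (1, 0), (-1, 0)),
     ((1, 0), (1, 0), (0, 1)), ((1, 0), (0, -1), (1, 0)), ((1, 0), (0, -1), (0, 1))]"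

definition L9_prime_multiple_points :: "gpt list" where
  "L9_prime_multiple_points = [((1, 0), (-1, 0), (-1, -1)), ((1, 0), (-1, 0), (-1, 1)),
     ((1, 0), (-1, 1), (-1, 0)), ((1, 0), (-1, -1), (-1, 0)), ((2, 0), (-1, 1), (-1, 1)),
     ((2, 0), (-1, -1), (-1, -1)), ((0, 0), (0, 0), (1, 0)), ((0, 0), (1, 0), (0, 0)),
     ((0, 0), (1, 0), (1, 0)), ((0, 0), (1, 0), (0, 1)), ((1, 0), (0, 0), (0, 0)),
     ((1, 0), (0, 0), (-1, 0)), ((1, 0), (0, 0), (0, 1)), ((1, 0), (-1, 0), (0, 0)),
     ((1, 0), (0, -1), (0, 0)), ((1, 0), (-1, 0), (-1, 0))]"

lemma L9_prime_lists_multiple_points: "lists_multiple_points L9_prime L9_prime_multiple_points"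
  by code_simp

lemma same_multiplicities:
  "map (gmult L9) L9_multiple_points = map (gmult L9_prime) L9_prime_multiple_points"
  by code_simp

(* The simple points and the left-inverse certificates below were found by exact linear algebra
   over \<rat>(\<i>); they are only checked here. *)
definition coordinate_line_points :: "(gpt \<times> gpt) list" where
  "coordinate_line_points =
    [(((1, 0), (0, 0), (0, 0)), ((0, 0), (1, 0), (-1, 0))),
     (((1, 0), (0, 0), (0, 0)), ((0, 0), (1, 0), (0, -1))),
     (((0, 0), (1, 0), (0, 0)), ((1, 0), (0, 0), (0, -1))),
     (((0, 0), (1, 0), (0, 0)), ((1, 0), (0, 0), (1, 0))),
     (((0, 0), (0, 0), (1, 0)), ((1, 0), (0, 1), (0, 0))),
     (((0, 0), (0, 0), (1, 0)), ((1, 0), (1, 0), (0, 0))),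
     (((1, 0), (0, 0), (0, 0)), ((0, 0), (1, 0), (-1, -1))),
     (((1, 0), (0, 0), (0, 0)), ((0, 0), (1, 0), (-1, 1))),
     (((1, 0), (0, 0), (0, 0)), ((0, 0), (1, 0), (1, -1))),
     (((0, 0), (1, 0), (0, 0)), ((1, 0), (0, 0), (-1, -1))),
     (((0, 0), (1, 0), (0, 0)), ((1, 0), (0, 0), (-1, 1))),
     (((0, 0), (1, 0), (0, 0)), ((1, 0), (0, 0), (1, -1))),
     (((0, 0), (0, 0), (1, 0)), ((1, 0), (-1, -1), (0, 0))),
     (((0, 0), (0, 0), (1, 0)), ((1, 0), (-1, 1), (0, 0))),
     (((0, 0), (0, 0), (1, 0)), ((1, 0), (1, -1), (0, 0)))]"

definition other_line_points :: "(gpt \<times> gpt) list" where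
  "other_line_points =
    [(((1, 0), (1, 0), (0, 0)), ((1, 0), (-1, 0), (0, -1))),
     (((1, 0), (1, 0), (0, 0)), ((1, 0), (-1, 0), (0, 1))),
     (((1, 0), (1, 0), (0, 0)), ((1, 0), (-1, 0), (1, 0))),
     (((1, 0), (1, 0), (0, 0)), ((1, 0), (-1, 0), (1, -1))),
     (((1, 0), (0, 0), (1, 0)), ((1, 1), (-1, 0), (-1, -1))),
     (((1, 0), (0, 0), (1, 0)), ((1, 1), (0, -1), (-1, -1))),
     (((1, 0), (0, 0), (1, 0)), ((1, 1), (0, 1), (-1, -1))),
     (((1, 0), (0, 0), (1, 0)), ((1, 1), (1, 0), (-1, -1))),
     (((0, 0), (1, 0), (-1, 0)), ((1, 0), (0, -1), (0, -1))),
     (((0, 0), (1, 0), (-1, 0)), ((1, 0), (0, 1), (0, 1))),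
     (((0, 0), (1, 0), (-1, 0)), ((1, 0), (1, 0), (1, 0))),
     (((1, 0), (1, 0), (0, 1)), ((1, 0), (-1, -1), (1, 0))),
     (((1, 0), (1, 0), (0, 1)), ((1, 0), (0, -1), (1, 1))),
     (((1, 0), (1, 0), (0, 1)), ((1, 0), (0, 1), (-1, 1))),
     (((1, 0), (1, 0), (0, 1)), ((1, 0), (1, 0), (0, 2))),
     (((1, 0), (0, -1), (1, 0)), ((1, 0), (-1, -1), (0, -1))),
     (((1, 0), (0, -1), (1, 0)), ((1, 0), (1, -1), (0, 1))),
     (((1, 0), (0, -1), (1, 0)), ((1, 0), (0, 1), (-2, 0))),
     (((1, 0), (0, -1), (0, 1)), ((1, 0), (1, -1), (1, 0))),
     (((1, 0), (0, -1), (0, 1)), ((1, 0), (0, 1), (0, 2)))]"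

definition generic_points :: "gpt list" where
  "generic_points =
    [((1, 0), (1, 0), (0, -1)), ((1, 0), (1, 0), (0, 1)), ((1, 0), (0, -1), (0, 1)),
     ((1, 0), (0, 1), (1, 0)), ((1, 0), (0, 1), (0, -1)), ((1, 1), (1, 0), (0, -1)),
     ((1, 1), (0, 1), (1, 0)), ((1, 1), (0, 1), (0, -1)), ((1, 1), (0, 1), (-1, 0)),
     ((1, 0), (1, 1), (1, 0))]"

definition coordinate_certificate :: "(gauss \<times> (nat \<times> gauss) list) list" where
  "coordinate_certificate =
    [((20, -20), [(0, (8, 4)), (1, (-4, -8)), (6, (-5, 5)), (7, (-1, -2)), (8, (2, 1))]),
     ((4, 0), [(0, (-2, 2)), (1, (2, -2)), (6, (-1, -1)), (7, (1, 0)), (8, (0, 1))]),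
     ((4, 4), [(0, (-4, -4)), (1, (4, 4)), (6, (3, -3)), (7, (-1, 2)), (8, (-2, 1))]),
     ((-2, -2), [(0, (0, 4)), (1, (0, -4)), (6, (-2, 0)), (7, (1, 0)), (8, (1, 0))]),
     ((10, 10), [(0, (12, -4)), (1, (-4, 12)), (6, (5, 5)), (7, (-1, -2)), (8, (-2, -1))]),
     ((-20, 20), [(2, (-8, 4)), (3, (4, 0)), (9, (3, 1)), (10, (1, 0)), (11, (0, -5))]),
     ((8, 4), [(2, (-2, 2)), (3, (2, -2)), (9, (1, 1)), (10, (1, 0)), (11, (-2, -1))]),
     ((-12, 4), [(2, (4, -4)), (3, (-4, 4)), (9, (-1, 1)), (10, (-1, -2)), (11, (2, 1))]),
     ((-6, 2), [(2, (4, 0)), (3, (-4, 0)), (9, (0, -2)), (10, (1, 0)), (11, (-1, 2))]),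
     ((10, 10), [(2, (12, 4)), (3, (-4, 4)), (9, (1, -3)), (10, (1, 0)), (11, (0, 5))]),
     ((20, -20), [(4, (4, 0)), (5, (0, -4)), (12, (-1, 1)), (13, (-1, 2)), (14, (-2, 1))]),
     ((20, 0), [(4, (-2, 2)), (5, (2, -2)), (12, (1, 1)), (13, (1, -2)), (14, (-2, 1))]),
     ((20, 20), [(4, (-4, -4)), (5, (4, 4)), (12, (3, -3)), (13, (-1, 2)), (14, (-2, 1))]),
     ((10, 10), [(4, (0, -4)), (5, (0, 4)), (12, (-2, 0)), (13, (1, -2)), (14, (1, 2))]),
     ((10, 10), [(4, (4, 4)), (5, (4, 4)), (12, (1, 1)), (13, (-1, 2)), (14, (2, -1))])]"

definition other_certificate :: "(gauss \<times> (nat \<times> gauss) list) list" where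
  "other_certificate =
    [((-6, 2), [(0, (2, 1)), (1, (1, 0)), (2, (-1, -3)), (3, (-2, 2))]),
     ((640, 0), [(0, (480, -980)), (1, (68, -424)), (2, (-580, 620)), (3, (592, 664)), (4, (85, -190)), (5, (110, 485)), (6, (-160, -115)), (7, (-235, 20)), (8, (1040, 400)), (9, (480, -80)), (10, (680, 120)), (11, (-208, 800)), (12, (-1320, 120)), (13, (-16, -48)), (14, (-416, -152)), (15, (544, 472)), (16, (40, -400)), (17, (-264, 8)), (18, (128, 336)), (19, (152, -216))]),
     ((320, 320), [(0, (-660, -780)), (1, (-508, -76)), (2, (400, 840)), (3, (808, -424)), (4, (-120, -55)), (5, (350, -85)), (6, (-70, 155)), (7, (40, 165)), (8, (320, -720)), (9, (-80, -320)), (10, (160, -480)), (11, (624, 176)), (12, (80, 1040)), (13, (32, 16)), (14, (-136, 328)), (15, (328, -376)), (16, (-344, -8)), (17, (16, 224)), (18, (304, -112)), (19, (-144, -128))]),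
     ((640, 0), [(0, (120, -180)), (1, (20, 80)), (2, (-140, 20)), (3, (0, 120)), (4, (205, -40)), (5, (-100, 65)), (6, (-10, -115)), (7, (-55, -30)), (8, (-80, 240)), (9, (0, -80)), (10, (-40, 40)), (11, (-240, -224)), (12, (200, -440)), (13, (144, 112)), (14, (176, -88)), (15, (-176, 152)), (16, (136, 32)), (17, (40, -104)), (18, (-128, -16)), (19, (8, 56))]),
     ((640, 0), [(0, (800, -660)), (1, (324, -552)), (2, (-900, 300)), (3, (336, 792)), (4, (85, -190)), (5, (110, 485)), (6, (-160, -115)), (7, (-235, 20)), (8, (1040, 400)), (9, (480, -80)), (10, (680, 120)), (11, (-208, 800)), (12, (-1320, 120)), (13, (-16, -48)), (14, (-416, -152)), (15, (544, 472)), (16, (40, -400)), (17, (-264, 8)), (18, (128, 336)), (19, (152, -216))]),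
     ((160, 0), [(0, (-310, -210)), (1, (-194, -98)), (2, (160, 300)), (3, (284, -172)), (4, (-65, -45)), (5, (170, -35)), (6, (-45, 70)), (7, (10, 80)), (8, (120, -360)), (9, (-80, -160)), (10, (40, -240)), (11, (264, 72)), (12, (40, 440)), (13, (16, 8)), (14, (-60, 140)), (15, (164, -188)), (16, (-124, 12)), (17, (0, 96)), (18, (104, -72)), (19, (-64, -48))]),
     ((640, 0), [(0, (-120, -340)), (1, (-364, 192)), (2, (180, 20)), (3, (64, -232)), (4, (240, 195)), (5, (-155, -210)), (6, (155, -70)), (7, (60, -55)), (8, (-480, 0)), (9, (-240, -160)), (10, (-280, -200)), (11, (240, -640)), (12, (1080, -40)), (13, (160, 320)), (14, (400, 200)), (15, (-416, -88)), (16, (24, 208)), (17, (232, -40)), (18, (-160, -240)), (19, (-120, 120))]),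
     ((320, -320), [(0, (-580, -620)), (1, (-412, -124)), (2, (240, 840)), (3, (712, -296)), (4, (-165, -80)), (5, (355, -60)), (6, (-105, 160)), (7, (15, 180)), (8, (240, -640)), (9, (-160, -240)), (10, (80, -400)), (11, (496, 240)), (12, (-80, 880)), (13, (32, 16)), (14, (-168, 264)), (15, (328, -376)), (16, (-216, -72)), (17, (-32, 208)), (18, (176, -48)), (19, (-96, -112))]),
     ((640, 0), [(0, (120, -660)), (1, (-492, -144)), (2, (180, 500)), (3, (512, -136)), (4, (25, 250)), (5, (140, -245)), (6, (130, 115)), (7, (105, 80)), (8, (-240, -400)), (9, (-160, -400)), (10, (-40, -440)), (11, (784, -288)), (12, (840, 1000)), (13, (-144, 368)), (14, (80, 520)), (15, (-112, -456)), (16, (-280, 160)), (17, (232, 216)), (18, (64, -272)), (19, (-184, -8))]),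
     ((640, 0), [(0, (360, -180)), (1, (-172, -384)), (2, (-460, 180)), (3, (192, 344)), (4, (-10, 15)), (5, (195, 30)), (6, (-35, 70)), (7, (-10, 105)), (8, (160, -160)), (9, (80, -320)), (10, (200, -200)), (11, (304, 128)), (12, (-40, 600)), (13, (-160, 160)), (14, (-144, 232)), (15, (128, -216)), (16, (-168, -16)), (17, (40, 152)), (18, (96, -48)), (19, (-56, -72))]),
     ((640, 0), [(0, (-360, 620)), (1, (148, 176)), (2, (260, -220)), (3, (-288, -296)), (4, (-140, -65)), (5, (-35, -30)), (6, (15, 10)), (7, (20, -15)), (8, (-160, 0)), (9, (-80, 320)), (10, (-120, 120)), (11, (-208, 0)), (12, (-120, -280)), (13, (-16, -208)), (14, (-16, -152)), (15, (-16, -8)), (16, (40, 0)), (17, (-24, -72)), (18, (-32, 16)), (19, (72, 24))]),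
     ((320, 320), [(0, (1420, 180)), (1, (452, -396)), (2, (-960, -360)), (3, (-312, 1016)), (4, (15, 130)), (5, (-145, 250)), (6, (-25, -110)), (7, (-105, -70)), (8, (240, 640)), (9, (640, 240)), (10, (400, 400)), (11, (-336, 496)), (12, (-880, -240)), (13, (-288, 16)), (14, (-296, -152)), (15, (40, 360)), (16, (136, -168)), (17, (-176, -32)), (18, (-16, 208)), (19, (176, -128))]),
     ((640, 0), [(0, (-2080, -500)), (1, (-700, 600)), (2, (1420, 700)), (3, (560, -1480)), (4, (30, -185)), (5, (125, -280)), (6, (95, 140)), (7, (130, 25)), (8, (-320, -800)), (9, (-880, -320)), (10, (-520, -600)), (11, (400, -704)), (12, (1240, 280)), (13, (464, -48)), (14, (416, 232)), (15, (-64, -392)), (16, (-184, 272)), (17, (248, 40)), (18, (32, -336)), (19, (-232, 136))]),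
     ((4, 4), [(4, (1, 0)), (5, (0, 1)), (6, (0, -1)), (7, (-1, 0))]),
     ((640, 0), [(0, (760, 1100)), (1, (596, -208)), (2, (-380, -700)), (3, (-736, 408)), (4, (-250, 45)), (5, (-25, 180)), (6, (-35, -40)), (7, (-70, -45)), (8, (160, 320)), (9, (400, 480)), (10, (200, 280)), (11, (-272, 576)), (12, (-1000, -40)), (13, (-320, -320)), (14, (-368, -216)), (15, (192, 136)), (16, (56, -208)), (17, (-248, -8)), (18, (32, 144)), (19, (168, -104))]),
     ((-320, 320), [(0, (1080, 1680)), (1, (912, 104)), (2, (-440, -1400)), (3, (-1392, 576)), (4, (-110, 175)), (5, (-400, 135)), (6, (70, -155)), (7, (-20, -195)), (8, (-400, 800)), (9, (400, 800)), (10, (0, 720)), (11, (-768, 192)), (12, (-640, -960)), (13, (-368, -304)), (14, (-144, -448)), (15, (-272, 384)), (16, (256, -48)), (17, (-144, -176)), (18, (-160, 160)), (19, (240, 80))]),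
     ((640, 0), [(0, (-2080, -500)), (1, (-700, 600)), (2, (1420, 700)), (3, (560, -1480)), (4, (30, -105)), (5, (125, -360)), (6, (95, 60)), (7, (130, 105)), (8, (-320, -800)), (9, (-880, -320)), (10, (-520, -600)), (11, (400, -704)), (12, (1240, 280)), (13, (464, -48)), (14, (416, 232)), (15, (-64, -392)), (16, (-184, 272)), (17, (248, 40)), (18, (32, -336)), (19, (-232, 136))]),
     ((640, 0), [(0, (1320, -20)), (1, (180, -640)), (2, (-940, 20)), (3, (0, 920)), (4, (-160, 175)), (5, (165, 190)), (6, (-105, 30)), (7, (-120, 65)), (8, (480, 0)), (9, (560, 0)), (10, (360, -40)), (11, (240, 704)), (12, (-920, 840)), (13, (-464, 48)), (14, (-496, 168)), (15, (336, -72)), (16, (-152, -224)), (17, (-184, 216)), (18, (160, 80)), (19, (40, -200))]),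
     ((160, 160), [(0, (130, -630)), (1, (-174, -258)), (2, (-220, 400)), (3, (444, 188)), (4, (80, -30)), (5, (120, 75)), (6, (-45, 20)), (7, (-45, 65)), (8, (280, -120)), (9, (80, -320)), (10, (160, -200)), (11, (264, 136)), (12, (-40, 440)), (13, (-8, 176)), (14, (-76, 148)), (15, (172, -44)), (16, (-92, -44)), (17, (0, 88)), (18, (88, -24)), (19, (-48, -56))]),
     ((640, 0), [(0, (200, -500)), (1, (-268, -256)), (2, (-300, 500)), (3, (448, 216)), (4, (-10, 65)), (5, (195, -20)), (6, (-15, 80)), (7, (10, 95)), (8, (160, -320)), (9, (80, -160)), (10, (40, -200)), (11, (304, 128)), (12, (-40, 600)), (13, (-160, 160)), (14, (-144, 232)), (15, (128, -216)), (16, (-168, -16)), (17, (40, 152)), (18, (96, -48)), (19, (-56, -72))])]"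

definition euler_certificate :: "(gauss \<times> (nat \<times> gauss) list) list" where
  "euler_certificate =
    [((30, -10), [(0, (4, -13)), (1, (-4, 3)), (2, (0, 2)), (3, (-1, -3)), (4, (-1, -3)), (5, (1, 3)), (6, (6, -7)), (7, (1, -5)), (8, (-4, 3)), (9, (-2, -6))]),
     ((30, -10), [(0, (-1, 22)), (1, (-9, -12)), (2, (-5, -3)), (3, (1, -17)), (4, (4, 12)), (5, (-5, -5)), (6, (21, 13)), (7, (-4, -10)), (8, (-14, -2)), (9, (-2, -6))]),
     ((30, -10), [(0, (-16, 27)), (1, (6, -17)), (2, (-5, -3)), (3, (21, -7)), (4, (-16, 2)), (5, (-5, -5)), (6, (1, 28)), (7, (11, -15)), (8, (-9, -12)), (9, (-2, -6))]),
     ((30, -10), [(0, (-1, 22)), (1, (11, -2)), (2, (0, -8)), (3, (21, -7)), (4, (-1, -3)), (5, (-5, -5)), (6, (6, 18)), (7, (6, 0)), (8, (1, -7)), (9, (-2, -6))]),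
     ((10, -10), [(0, (5, -10)), (1, (0, 5)), (2, (1, 2)), (3, (-2, 4)), (4, (0, -5)), (5, (1, 3)), (6, (-5, -10)), (7, (1, 7)), (8, (5, 0))]),
     ((2, 6), [(0, (6, 8)), (1, (-1, -3)), (2, (-2, 1)), (3, (1, -7)), (4, (0, 5)), (5, (-3, 1)), (6, (8, 4)), (7, (-2, -4)), (8, (-3, 1))]),
     ((-6, 2), [(0, (-6, 7)), (1, (2, 1)), (2, (2, -2)), (3, (7, 1)), (4, (-1, -3)), (5, (-1, -3)), (6, (-3, 6)), (7, (3, 1)), (8, (1, -2))]),
     ((-10, 10), [(0, (5, -5)), (2, (1, 2)), (3, (-7, -1)), (4, (5, 0)), (5, (1, 3)), (6, (5, -5)), (7, (-4, 2))]),
     ((6, -2), [(0, (-1, 7)), (2, (1, 0)), (3, (3, -1)), (4, (1, -2)), (5, (-1, -3)), (6, (1, 3)), (7, (0, 2))]),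
     ((-2, -4), [(0, (-3, -1)), (3, (1, 1)), (5, (1, 0)), (6, (-2, 1))])]"

definition coordinate_indices :: "(nat \<times> nat \<times> nat \<times> nat) list" where
  "coordinate_indices = filter (\<lambda>\<kappa>. coord (fst \<kappa>) (snd \<kappa>) = 0) (field_indices 4)"

definition other_indices :: "(nat \<times> nat \<times> nat \<times> nat) list" where
  "other_indices = filter (\<lambda>\<kappa>. fst \<kappa> \<noteq> 0 \<and> coord (fst \<kappa>) (snd \<kappa>) \<noteq> 0) (field_indices 4)"

definition euler_indices :: "(nat \<times> nat \<times> nat \<times> nat) list" where
  "euler_indices = filter (\<lambda>\<kappa>. fst \<kappa> = 0) (field_indices 3)"

lemma line_points_on_L9_prime:
  "\<forall>(l, p)\<in>set (coordinate_line_points @ other_line_points).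
     l \<in> set L9_prime \<and> glin l p = (0, 0) \<and> gmult L9_prime p = 1"
  by code_simp

lemma generic_points_off_L9_prime: "\<forall>q\<in>set generic_points. gmult L9_prime q = 0"
  by code_simp

lemma coordinate_rows_vanish:
  "\<forall>\<kappa>\<in>set (field_indices 4). fst \<kappa> \<noteq> 0 \<and> coord (fst \<kappa>) (snd \<kappa>) \<noteq> 0 \<longrightarrow>
     (\<forall>lp\<in>set coordinate_line_points. row_entry lp \<kappa> = (0, 0))"
  by code_simp

lemma certificates_valid:
  "certifies_all (map (\<lambda>lp. map (row_entry lp) coordinate_indices) coordinate_line_points)
     coordinate_certificate"
  "length coordinate_certificate = length coordinate_indices"
  "certifies_all (map (\<lambda>lp. map (row_entry lp) other_indices) other_line_points) other_certificate"
  "length other_certificate = length other_indices"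
  "certifies_all (map (\<lambda>lp. map (row_entry lp) euler_indices)
     (map (Pair ((1, 0), (0, 0), (0, 0))) generic_points)) euler_certificate"
  "length euler_certificate = length euler_indices"
  by code_simp+

lemma L9_prime_tangent_quartics_vanish:
  assumes e: "e\<^sup>2 = -1" and h: "hpoly 4 a" "hpoly 4 b" "hpoly 4 c"
    and x_free: "\<And>i j k. a (Suc i, j, k) = 0"
    and tangent: "\<forall>(l, p)\<in>set (coordinate_line_points @ other_line_points).
      lin (of_gpt e l) (peval 4 a (of_gpt e p), peval 4 b (of_gpt e p), peval 4 c (of_gpt e p)) = 0"
  shows "\<forall>\<kappa>\<in>set (field_indices 4). field_coeff (a, b, c) \<kappa> = 0"
proof -
  have x_part: "field_coeff (a, b, c) \<kappa> = 0" if "fst \<kappa> = 0" "coord 0 (snd \<kappa>) \<noteq> 0" for \<kappa>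
  proof -
    obtain j i m k where \<kappa>: "\<kappa> = (j, i, m, k)"
      by (metis prod_cases4)
    with that obtain i' where "j = 0" "i = Suc i'"
      by (auto simp: coord_def gr0_conv_Suc)
    with \<kappa> show ?thesis
      by (simp add: field_coeff_def coord_def x_free)
  qed
  have coordinate_part: "\<forall>\<kappa>\<in>set coordinate_indices. field_coeff (a, b, c) \<kappa> = 0"
  proof (rule certified_vanishing_coefficients[OF e h _ _ _ _ certificates_valid(1,2)])
    show "\<forall>\<kappa>\<in>set (field_indices 4) - set coordinate_indices.
        field_coeff (a, b, c) \<kappa> = 0 \<or> (\<forall>lp\<in>set coordinate_line_points. row_entry lp \<kappa> = (0, 0))"
    proof
      fix \<kappa> assume \<kappa>: "\<kappa> \<in> set (field_indices 4) - set coordinate_indices"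
      then have "coord (fst \<kappa>) (snd \<kappa>) \<noteq> 0"
        by (simp add: coordinate_indices_def)
      with \<kappa> show "field_coeff (a, b, c) \<kappa> = 0 \<or> (\<forall>lp\<in>set coordinate_line_points. row_entry lp \<kappa> = (0, 0))"
        using bspec[OF coordinate_rows_vanish, of \<kappa>] x_part[of \<kappa>] by (cases "fst \<kappa> = 0") simp_all
    qed
  qed (use tangent in \<open>auto simp: coordinate_indices_def distinct_field_indices\<close>)
  have other_part: "\<forall>\<kappa>\<in>set other_indices. field_coeff (a, b, c) \<kappa> = 0"
  proof (rule certified_vanishing_coefficients[OF e h _ _ _ _ certificates_valid(3,4)])
    show "\<forall>\<kappa>\<in>set (field_indices 4) - set other_indices.
        field_coeff (a, b, c) \<kappa> = 0 \<or> (\<forall>lp\<in>set other_line_points. row_entry lp \<kappa> = (0, 0))"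
    proof
      fix \<kappa> assume "\<kappa> \<in> set (field_indices 4) - set other_indices"
      then have "\<kappa> \<in> set coordinate_indices \<or> fst \<kappa> = 0 \<and> coord 0 (snd \<kappa>) \<noteq> 0"
        by (auto simp: coordinate_indices_def other_indices_def)
      then show "field_coeff (a, b, c) \<kappa> = 0 \<or> (\<forall>lp\<in>set other_line_points. row_entry lp \<kappa> = (0, 0))"
        using coordinate_part x_part by blast
    qed
  qed (use tangent in \<open>auto simp: other_indices_def distinct_field_indices\<close>)
  show ?thesis
  proof
    fix \<kappa> assume "\<kappa> \<in> set (field_indices 4)"
    then have "\<kappa> \<in> set coordinate_indices \<or> \<kappa> \<in> set other_indices \<or> fst \<kappa> = 0 \<and> coord 0 (snd \<kappa>) \<noteq> 0"
      by (cases "fst \<kappa> = 0") (auto simp: coordinate_indices_def other_indices_def)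
    then show "field_coeff (a, b, c) \<kappa> = 0"
      using coordinate_part other_part x_part by blast
  qed
qed

lemma L9_prime_quartic_syzygy_is_euler_multiple:
  assumes e: "e\<^sup>2 = -1" and syz: "syzygy (arr_poly (map (of_gpt e) L9_prime)) 4 a b c"
  defines "h \<equiv> \<lambda>(i, j, k). a (Suc i, j, k)"
  shows "hpoly 3 h" "a = shift (1, 0, 0) h" "b = shift (0, 1, 0) h" "c = shift (0, 0, 1) h"
proof -
  have "hpoly (Suc 3) a" "hpoly (Suc 3) b" "hpoly (Suc 3) c"
    using syz by (simp_all add: syzygy_def numeral_eq_Suc)
  note normal = euler_normalization[OF this, folded h_def, simplified]
  show "hpoly 3 h"
    by (rule normal(1))
  define a' b' c' where "a' = (\<lambda>t. a t - shift (1, 0, 0) h t)"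
    and "b' = (\<lambda>t. b t - shift (0, 1, 0) h t)" and "c' = (\<lambda>t. c t - shift (0, 0, 1) h t)"
  have tangent: "lin (of_gpt e l) (peval 4 a' (of_gpt e p), peval 4 b' (of_gpt e p), peval 4 c' (of_gpt e p)) = 0"
    if "(l, p) \<in> set (coordinate_line_points @ other_line_points)" for l p
  proof -
    have "l \<in> set L9_prime" "glin l p = (0, 0)" "gmult L9_prime p = 1"
      using bspec[OF line_points_on_L9_prime that] by simp_all
    then have on_line: "of_gpt e l \<in> set (map (of_gpt e) L9_prime)" "lin (of_gpt e l) (of_gpt e p) = 0"
      "mult_at (map (of_gpt e) L9_prime) (of_gpt e p) = 1"
      by (simp_all add: lin_of_gpt[OF e] mult_at_of_gpt[OF e])
    have "lin (of_gpt e l) (peval 4 a' (of_gpt e p), peval 4 b' (of_gpt e p), peval 4 c' (of_gpt e p))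
        = lin (of_gpt e l) (peval 4 a (of_gpt e p), peval 4 b (of_gpt e p), peval 4 c (of_gpt e p))
          - peval 3 h (of_gpt e p) * lin (of_gpt e l) (of_gpt e p)"
      by (cases "of_gpt e l"; cases "of_gpt e p")
        (simp add: a'_def b'_def c'_def normal(6-8) lin_def algebra_simps)
    then show ?thesis
      using syzygy_vanishes_on_simple_points[OF syz on_line] on_line(2) by simp
  qed
  have "hpoly 4 a'" "hpoly 4 b'" "hpoly 4 c'"
    using normal(2-4) by (simp_all add: a'_def b'_def c'_def)
  moreover have "a' (Suc i, j, k) = 0" for i j k
    using normal(5) by (simp add: a'_def)
  moreover have "\<forall>(l, p)\<in>set (coordinate_line_points @ other_line_points).
      lin (of_gpt e l) (peval 4 a' (of_gpt e p), peval 4 b' (of_gpt e p), peval 4 c' (of_gpt e p)) = 0"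
    using tangent by auto
  ultimately have "\<forall>\<kappa>\<in>set (field_indices 4). field_coeff (a', b', c') \<kappa> = 0"
    by (rule L9_prime_tangent_quartics_vanish[OF e])
  then have vanish: "a' t = 0" "b' t = 0" "c' t = 0" if "t \<in> monomials 4" for t
    using that by (auto simp: set_field_indices field_coeff_def coord_def)
  have hp: "hpoly 4 a" "hpoly 4 b" "hpoly 4 c"
    using syz by (simp_all add: syzygy_def)
  have "f = shift m h" if "hpoly 4 f" "hpoly 4 (shift m h)" "\<forall>t\<in>monomials 4. f t - shift m h t = 0"
    for f m
  proof
    fix t
    show "f t = shift m h t"
    proof (cases "t \<in> monomials 4")
      case False
      then show ?thesis
        using that(1,2) unfolding hpoly_iff_monomials by metis
    qed (use that(3) in simp)
  qed
  moreover have "hpoly 4 (shift (1, 0, 0) h)" "hpoly 4 (shift (0, 1, 0) h)" "hpoly 4 (shift (0, 0, 1) h)"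
    using hpoly_shift[OF normal(1), of 1 0 0] hpoly_shift[OF normal(1), of 0 1 0]
      hpoly_shift[OF normal(1), of 0 0 1] by simp_all
  ultimately show "a = shift (1, 0, 0) h" "b = shift (0, 1, 0) h" "c = shift (0, 0, 1) h"
    using hp vanish by (simp_all add: a'_def b'_def c'_def)
qed

lemma L9_prime_no_quartic_syzygy:
  assumes e: "e\<^sup>2 = -1"
  shows "\<not> syzygy (arr_poly (map (of_gpt e) L9_prime)) 4 a b c"
proof
  assume syz: "syzygy (arr_poly (map (of_gpt e) L9_prime)) 4 a b c"
  let ?L = "map (of_gpt e) L9_prime"
  define h where "h = (\<lambda>(i, j, k). a (Suc i, j, k))"
  note euler = L9_prime_quartic_syzygy_is_euler_multiple[OF e syz, folded h_def]
  have field: "(peval 4 a p, peval 4 b p, peval 4 c p)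
      = (peval 3 h p * fst p, peval 3 h p * fst (snd p), peval 3 h p * snd (snd p))" for p
    using peval_shift[OF euler(1), of 1 0 0 p] peval_shift[OF euler(1), of 0 1 0 p]
      peval_shift[OF euler(1), of 0 0 1 p]
    by (cases p) (simp add: euler(2-4))
  have generic: "peval 3 h (of_gpt e q) = 0" if "q \<in> set generic_points" for q
  proof -
    have "arr_deriv ?L (of_gpt e q) (peval 4 a (of_gpt e q), peval 4 b (of_gpt e q), peval 4 c (of_gpt e q)) = 0"
      using syz unfolding syzygy_arr_poly_iff by blast
    then have "peval 3 h (of_gpt e q) * (of_nat (length ?L) * arr_poly ?L (of_gpt e q)) = 0"
      by (simp only: field arr_deriv_scale arr_deriv_euler prod.collapse)
    moreover have "arr_poly ?L (of_gpt e q) \<noteq> 0"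
      using generic_points_off_L9_prime that by (simp add: arr_poly_nonzero mult_at_of_gpt[OF e])
    ultimately show ?thesis
      by (simp add: L9_prime_def)
  qed
  have "\<forall>\<kappa>\<in>set euler_indices. field_coeff (h, \<lambda>_. 0, \<lambda>_. 0) \<kappa> = 0"
  proof (rule certified_vanishing_coefficients[OF e euler(1) _ _ _ _ _ _ certificates_valid(5,6)])
    show "\<forall>(l, p)\<in>set (map (Pair ((1, 0), (0, 0), (0, 0))) generic_points).
        lin (of_gpt e l) (peval 3 h (of_gpt e p), peval 3 (\<lambda>_. 0) (of_gpt e p), peval 3 (\<lambda>_. 0) (of_gpt e p)) = 0"
      using generic by (auto simp: of_gpt_def lin_def peval_def of_gauss_def)
  qed (auto simp: euler_indices_def distinct_field_indices hpoly_def field_coeff_def coord_def)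
  then have "\<forall>t\<in>monomials 3. h t = 0"
    by (auto simp: euler_indices_def set_field_indices field_coeff_def coord_def)
  then have "h t = 0" for t
    using euler(1) unfolding hpoly_iff_monomials by blast
  then have "a = (\<lambda>_. 0)" "b = (\<lambda>_. 0)" "c = (\<lambda>_. 0)"
    using euler(2-4) by (auto intro!: ext elim!: shift.elims)
  with syz show False
    by (simp add: syzygy_def)
qed

lemma L9_prime_mdr_gt:
  assumes e: "e\<^sup>2 = -1"
  shows "4 < mdr (arr_poly (map (of_gpt e) L9_prime))"
proof -
  let ?L = "map (of_gpt e) L9_prime" and ?p = "of_gpt e ((0, 0), (1, 0), (-1, 0))"
  have x: "(1, 0, 0) \<in> set ?L" "lin (1, 0, 0) ?p = 0"
    by (simp_all add: L9_prime_def of_gpt_def lin_def)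
  have "gmult L9_prime ((0, 0), (1, 0), (-1, 0)) = 1"
    by code_simp
  then have "arr_deriv ?L ?p (1, 0, 0) \<noteq> 0"
    using arr_deriv_on_line[OF x] arr_poly_remove1_nonzero[OF x] by (simp add: mult_at_of_gpt[OF e] lin_def)
  moreover have "length ?L - 1 = 8"
    by (simp add: L9_prime_def)
  ultimately obtain a b c where "syzygy (arr_poly ?L) 8 a b c"
    using koszul_syzygy by metis
  then show ?thesis
    by (rule mdr_gt) (rule L9_prime_no_quartic_syzygy[OF e])
qed

theorem mainTheorem6:
  fixes e :: complex
  assumes "e ^ 2 + 1 = 0"
  shows "weak_ziegler_pair
     [(0, 1, 0), (0, 1, -1), (0, 1, 1), (-1, 1, 0), (1, 1, 0),
      (-1, 1, -2), (-1, 1, 2), (1, 1, -2), (1, 1, 2)]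
     [(1, 0, 0), (0, 1, 0), (0, 0, 1), (1, 1, 0), (1, 0, 1), (0, 1, -1),
      (1, 1, e), (1, -e, 1), (1, -e, e)]"
proof -
  have e: "e\<^sup>2 = -1"
    using assms by (simp add: eq_neg_iff_add_eq_0)
  have L9: "[(0, 1, 0), (0, 1, -1), (0, 1, 1), (-1, 1, 0), (1, 1, 0),
      (-1, 1, -2), (-1, 1, 2), (1, 1, -2), (1, 1, 2)] = map (of_gpt e) L9"
    and L9': "[(1, 0, 0), (0, 1, 0), (0, 0, 1), (1, 1, 0), (1, 0, 1), (0, 1, -1),
      (1, 1, e), (1, -e, 1), (1, -e, e)] = map (of_gpt e) L9_prime"
    by (simp_all add: L9_def L9_prime_def of_gpt_def of_gauss_def)
  have "mdr (arr_poly (map (of_gpt e) L9)) \<le> 4"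
    using mdr_le[OF L9_quartic_syzygy] by (simp only: L9)
  moreover have "length L9 = length L9_prime"
    by (simp add: L9_def L9_prime_def)
  ultimately show ?thesis
    unfolding weak_ziegler_pair_def L9 L9'
    using lists_multiple_points_sound(1)[OF e L9_lists_multiple_points]
      lists_multiple_points_sound(1)[OF e L9_prime_lists_multiple_points]
      same_weak_comb_by_multiple_points[OF e L9_lists_multiple_points L9_prime_lists_multiple_points
        _ same_multiplicities]
      L9_prime_mdr_gt[OF e]
    by simp
qed

end
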